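(* Fix a replacement rule $\{p_{(R,\alpha)}(\mathbf{x})\}_{(R,\alpha)}$ satisfying the Fixation Axiom and a mutational bias $\nu\in(0,1)$. Then the following four conditions are equivalent: (a) $\rho_A>\rho_a$; (b) $\displaystyle\lim_{u\to 0}\mathbb{E}_{\mathrm{MSS}}[x]>\frac{\nu\, b(\mathbf{a})}{\nu\, b(\mathbf{a})+(1-\nu)\, b(\mathbf{A})}$; (c) $\mathbb{E}_{\mathrm{RMC}}[\Delta_{\mathrm{sel}}]>0$; (d) $\frac{d}{du}\mathbb{E}_{\mathrm{MSS}}[\Delta_{\mathrm{sel}}]\big|_{u=0}>0$.
   Context: Setting. $G$ is a finite nonempty set of genetic sites, $n=|G|$. A state is $\mathbf{x}=(x_g)_{g\in G}\in\{0,1\}^G$ ($x_g=1$: site $g$ carries allele $A$; $x_g=0$: allele $a$). For $S\subseteq G$, $\mathbf{1}_S$ is the state with $x_g=1$ iff $g\in S$; $\mathbf{a}=\mathbf{1}_\emptyset$, $\mathbf{A}=\mathbf{1}_G$. A replacement event is a pair $(R,\alpha)$ with $R\subseteq G$ and $\alpha:R\to G$. A replacement rule assigns to each state $\mathbf{x}$ a probability distribution $\{p_{(R,\alpha)}(\mathbf{x})\}_{(R,\alpha)}$ over all replacement events. Given a mutation probability $u\in[0,1]$ and mutational bias $\nu\in(0,1)$, the evolutionary Markov chain on $\{0,1\}^G$ moves from $\mathbf{x}$ to $\mathbf{x}'$ as follows: an event $(R,\alpha)$ is drawn with probability $p_{(R,\alpha)}(\mathbf{x})$; then, independently for each $g\in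 R$, $x'_g=x_{\alpha(g)}$ with probability $1-u$, $x'_g=1$ with probability $u\nu$, $x'_g=0$ with probability $u(1-\nu)$; for $g\notin R$, $x'_g=x_g$. $P^{(t)}_{\mathbf{x}\to\mathbf{y}}$ denotes the $t$-step transition probability. Fixation Axiom: there exist $g\in G$, $m\ge 1$ and events $(R_1,\alpha_1),\dots,(R_m,\alpha_m)$ with $p_{(R_k,\alpha_k)}(\mathbf{x})>0$ for all $k$ and all states $\mathbf{x}$, $g\in R_k$ for some $k$, and $\tilde\alpha_1\circ\cdots\circ\tilde\alpha_m(h)=g$ for all $h\in G$, where $\tilde\alpha_k:G\to G$ equals $\alpha_k$ on $R_k$ and the identity off $R_k$. Quantities. $e_{gh}(\mathbf{x})=\sum_{(R,\alpha):\,h\in R,\ \alpha(h)=g}p_{(R,\alpha)}(\mathbf{x})$; $b_g(\mathbf{x})=\sum_{h}e_{gh}(\mathbf{x})$; $d_g(\mathbf{x})=\sum_h e_{hg}(\mathbf{x})$; $b(\mathbf{x})=\sum_g b_g(\mathbf{x})$; $x=\frac1n\sum_g x_g$; $\Delta_{\mathrm{sel}}(\mathbf{x})=\sum_{g}x_g\big(b_g(\mathbf{x})-d_g(\mathbf{x})\big)$. Fixation probabilities (computed for $u=0$, where $\mathbf{a},\mathbf{A}$ are absorbing and absorption occurs a.s.): $\mu_A(\mathbf{1}_{\{g\}})=d_g(\mathbf{a})/b(\mathbf{a})$ and $\mu_A=0$ on other states; $\mu_a(\mathbf{1}_{G\setminus\{g\}})=d_g(\mathbf{A})/b(\mathbf{A})$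 and $\mu_a=0$ elsewhere; $\rho_A=\sum_{\mathbf{x}}\mu_A(\mathbf{x})\lim_{t\to\infty}P^{(t)}_{\mathbf{x}\to\mathbf{A}}$, $\rho_a=\sum_{\mathbf{x}}\mu_a(\mathbf{x})\lim_{t\to\infty}P^{(t)}_{\mathbf{x}\to\mathbf{a}}$. Distributions. For $u>0$ the chain has a unique stationary distribution $\pi_{\mathrm{MSS}}$; $\mathbb{E}_{\mathrm{MSS}}$ is expectation under it. Each $\pi_{\mathrm{MSS}}(\mathbf{x})$ extends smoothly to $u\in[0,1]$ (value at $0$ given by $\lim_{u\to0}$), and $\frac{d}{du}(\cdot)|_{u=0}$ denotes the one-sided derivative of this extension at $u=0$. The rare-mutation conditional distribution on $\{0,1\}^G\setminus\{\mathbf{a},\mathbf{A}\}$ is $\pi_{\mathrm{RMC}}(\mathbf{x})=\lim_{u\to0}\pi_{\mathrm{MSS}}(\mathbf{x})/\big(1-\pi_{\mathrm{MSS}}(\mathbf{a})-\pi_{\mathrm{MSS}}(\mathbf{A})\big)$ (the limit exists); $\mathbb{E}_{\mathrm{RMC}}$ is expectation under it. *)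

theory Defs
  imports "HOL-Analysis.Analysis"
begin

text \<open>A state is the set of sites carrying
allele A, so x_g = 1 iff g is in the state.  A replacement event (R, alpha) with
alpha : R -> G is represented canonically by the pair (R, alpha~), where alpha~ is the
identity outside R.\<close>

type_synonym 'g event = "'g set \<times> ('g \<Rightarrow> 'g)"
type_synonym 'g rule = "'g set \<Rightarrow> 'g event \<Rightarrow> real"

definition events :: "'g event set" where
  "events = {(R, \<alpha>). \<forall>g. g \<notin> R \<longrightarrow> \<alpha> g = g}"

definition replacement_rule :: "('g::finite) rule \<Rightarrow> bool" where
  "replacement_rule p \<longleftrightarrow>
     (\<forall>x. \<forall>e\<in>events. p x e \<ge> 0) \<and> (\<forall>x. (\<Sum>e\<in>events. p x e) = 1)"

definition fixation_axiom :: "('g::finite) rule \<Rightarrow> bool" where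
  "fixation_axiom p \<longleftrightarrow>
     (\<exists>g es. es \<noteq> [] \<and> (\<forall>e\<in>set es. e \<in> events \<and> (\<forall>x. p x e > 0))
        \<and> (\<exists>e\<in>set es. g \<in> fst e)
        \<and> (\<forall>h. foldr (\<lambda>e f. snd e \<circ> f) es id h = g))"

definition ee :: "('g::finite) rule \<Rightarrow> 'g \<Rightarrow> 'g \<Rightarrow> 'g set \<Rightarrow> real" where
  "ee p g h x = (\<Sum>e\<in>{(R, \<alpha>) \<in> events. h \<in> R \<and> \<alpha> h = g}. p x e)"

definition bb :: "('g::finite) rule \<Rightarrow> 'g \<Rightarrow> 'g set \<Rightarrow> real" where
  "bb p g x = (\<Sum>h\<in>UNIV. ee p g h x)"

definition dd :: "('g::finite) rule \<Rightarrow> 'g \<Rightarrow> 'g set \<Rightarrow> real" where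
  "dd p g x = (\<Sum>h\<in>UNIV. ee p h g x)"

definition btot :: "('g::finite) rule \<Rightarrow> 'g set \<Rightarrow> real" where
  "btot p x = (\<Sum>g\<in>UNIV. bb p g x)"

definition xbar :: "('g::finite) set \<Rightarrow> real" where
  "xbar x = real (card x) / real CARD('g)"

definition Delta_sel :: "('g::finite) rule \<Rightarrow> 'g set \<Rightarrow> real" where
  "Delta_sel p x = (\<Sum>g\<in>x. bb p g x - dd p g x)"

definition trans :: "('g::finite) rule \<Rightarrow> real \<Rightarrow> real \<Rightarrow> 'g set \<Rightarrow> 'g set \<Rightarrow> real" where
  "trans p u \<nu> x y =
     (\<Sum>(R, \<alpha>)\<in>events. p x (R, \<alpha>) *
        (\<Prod>g\<in>UNIV. if g \<in> R
           then (1 - u) * (if (g \<in> y) = (\<alpha> g \<in> x) then 1 else 0)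
                + u * (if g \<in> y then \<nu> else 1 - \<nu>)
           else (if (g \<in> y) = (g \<in> x) then 1 else 0)))"

fun transn :: "('g::finite) rule \<Rightarrow> real \<Rightarrow> real \<Rightarrow> nat \<Rightarrow> 'g set \<Rightarrow> 'g set \<Rightarrow> real" where
  "transn p u \<nu> 0 x y = (if x = y then 1 else 0)"
| "transn p u \<nu> (Suc t) x y = (\<Sum>z\<in>UNIV. transn p u \<nu> t x z * trans p u \<nu> z y)"

text \<open>Fixation probabilities (at u = 0; nu is irrelevant there).\<close>
definition rho_A :: "('g::finite) rule \<Rightarrow> real \<Rightarrow> real" where
  "rho_A p \<nu> = (\<Sum>g\<in>UNIV. dd p g {} / btot p {} *
                 lim (\<lambda>t. transn p 0 \<nu> t {g} UNIV))"

definition rho_a :: "('g::finite) rule \<Rightarrow> real \<Rightarrow> real" where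
  "rho_a p \<nu> = (\<Sum>g\<in>UNIV. dd p g UNIV / btot p UNIV *
                 lim (\<lambda>t. transn p 0 \<nu> t (UNIV - {g}) {}))"

definition stationary :: "('g::finite) rule \<Rightarrow> real \<Rightarrow> real \<Rightarrow> ('g set \<Rightarrow> real) \<Rightarrow> bool" where
  "stationary p u \<nu> \<pi> \<longleftrightarrow> (\<forall>x. \<pi> x \<ge> 0) \<and> (\<Sum>x\<in>UNIV. \<pi> x) = 1
      \<and> (\<forall>y. (\<Sum>x\<in>UNIV. \<pi> x * trans p u \<nu> x y) = \<pi> y)"

text \<open>The (unique, for u > 0) mutation-selection stationary distribution.\<close>
definition pi_MSS :: "('g::finite) rule \<Rightarrow> real \<Rightarrow> real \<Rightarrow> 'g set \<Rightarrow> real" where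
  "pi_MSS p u \<nu> = (THE \<pi>. stationary p u \<nu> \<pi>)"

definition E_MSS :: "('g::finite) rule \<Rightarrow> real \<Rightarrow> real \<Rightarrow> ('g set \<Rightarrow> real) \<Rightarrow> real" where
  "E_MSS p u \<nu> f = (\<Sum>x\<in>UNIV. pi_MSS p u \<nu> x * f x)"

definition pi_MSS_ext :: "('g::finite) rule \<Rightarrow> real \<Rightarrow> real \<Rightarrow> 'g set \<Rightarrow> real" where
  "pi_MSS_ext p u \<nu> x =
     (if u = 0 then Lim (at_right 0) (\<lambda>v. pi_MSS p v \<nu> x) else pi_MSS p u \<nu> x)"

definition E_MSS_ext :: "('g::finite) rule \<Rightarrow> real \<Rightarrow> real \<Rightarrow> ('g set \<Rightarrow> real) \<Rightarrow> real" where
  "E_MSS_ext p u \<nu> f = (\<Sum>x\<in>UNIV. pi_MSS_ext p u \<nu> x * f x)"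

definition right_deriv0 :: "(real \<Rightarrow> real) \<Rightarrow> real" where
  "right_deriv0 F = (THE D. (F has_real_derivative D) (at_right 0))"

definition pi_RMC :: "('g::finite) rule \<Rightarrow> real \<Rightarrow> 'g set \<Rightarrow> real" where
  "pi_RMC p \<nu> x = Lim (at_right 0)
     (\<lambda>u. pi_MSS p u \<nu> x / (1 - pi_MSS p u \<nu> {} - pi_MSS p u \<nu> UNIV))"

definition E_RMC :: "('g::finite) rule \<Rightarrow> real \<Rightarrow> ('g set \<Rightarrow> real) \<Rightarrow> real" where
  "E_RMC p \<nu> f = (\<Sum>x\<in>UNIV - {{}, UNIV}. pi_RMC p \<nu> x * f x)"

end

theory Submission
  imports Defs
begin

text \<open>Without mutation (\<open>u = 0\<close>) the monomorphic states \<open>a\<close> and \<open>A\<close> are absorbing, and the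
  Fixation Axiom makes absorption certain; the probability \<open>h x\<close> of absorption in \<open>A\<close> is
  harmonic for the mutation-free kernel \<open>T\<^sub>0\<close>, and \<open>rho_A\<close>, \<open>rho_a\<close> are averages of \<open>h\<close> and
  \<open>1 - h\<close> over the states next to \<open>a\<close> and \<open>A\<close>.  For \<open>u > 0\<close> the chain satisfies Doeblin's
  condition, so \<open>pi_MSS\<close> exists, and it puts mass \<open>O(u)\<close> on polymorphic states.  Stationarity
  gives, for every \<open>h\<close>,
  \<open>\<Sum>x. pi_MSS x * (T\<^sub>u h - T\<^sub>0 h) x = \<Sum>x. pi_MSS x * (h - T\<^sub>0 h) x\<close>.
  For \<open>h\<close> the absorption probability the right-hand side vanishes; dividing the left-hand side
  by \<open>u\<close> and letting \<open>u \<rightarrow> 0\<close> gives the balance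
  \<open>pi(a) * \<nu> b(a) rho_A = pi(A) * (1 - \<nu>) b(A) rho_a\<close>, which determines the limits of
  \<open>pi_MSS(a)\<close> and \<open>pi_MSS(A)\<close> and hence (b).  For \<open>h x = |x|\<close> the right-hand side is
  \<open>-E_MSS[\<Delta>\<^sub>s\<^sub>e\<^sub>l]\<close>, so \<open>E_MSS[\<Delta>\<^sub>s\<^sub>e\<^sub>l] / u\<close> tends to
  \<open>pi(A) * (1 - \<nu>) b(A) - pi(a) * \<nu> b(a)\<close>: this is the derivative in (d), and, divided by the
  limit of the polymorphic mass over \<open>u\<close>, the expectation in (c).  All three criteria thus have
  the sign of \<open>rho_A - rho_a\<close>.\<close>

lemma sum_mult_delta [simp]:
  fixes f :: "'a::finite \<Rightarrow> 'b::semiring_1"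
  shows "(\<Sum>z\<in>UNIV. f z * (if z = y then 1 else 0)) = f y"
    and "(\<Sum>z\<in>UNIV. f z * (if y = z then 1 else 0)) = f y"
    and "(\<Sum>z\<in>UNIV. (if z = y then 1 else 0) * f z) = f y"
    and "(\<Sum>z\<in>UNIV. (if y = z then 1 else 0) * f z) = f y"
  by (simp_all add: if_distrib[where f="\<lambda>c. f _ * c"] if_distrib[where f="\<lambda>c. c * f _"] cong: if_cong)

lemma prod_if_one_zero:
  assumes "finite S"
  shows "(\<Prod>j\<in>S. if P j then 1 else 0) = (if \<forall>j\<in>S. P j then 1 else (0::'a::comm_semiring_1))"
  using assms by (auto intro!: prod_zero)

lemma sum_subsets_prod_if:
  fixes P N :: "'a::finite \<Rightarrow> 'b::comm_semiring_1"
  shows "(\<Sum>y\<in>UNIV. \<Prod>g\<in>UNIV. if g \<in> y then P g else N g) = (\<Prod>g\<in>UNIV. P g + N g)"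
proof -
  have "(\<Prod>g\<in>UNIV. if g \<in> y then P g else N g) = (\<Prod>g\<in>y. P g) * (\<Prod>g\<in>UNIV - y. N g)" for y
    by (simp add: prod.If_cases Int_def Collect_neg_eq Compl_eq_Diff_UNIV)
  then show ?thesis by (simp add: prod_add)
qed

lemma tendsto_bounded_mult_zero:
  fixes f g :: "'a \<Rightarrow> real"
  assumes "(f \<longlongrightarrow> 0) F" and "eventually (\<lambda>x. \<bar>g x\<bar> \<le> B) F"
  shows "((\<lambda>x. g x * f x) \<longlongrightarrow> 0) F"
proof -
  have "Bfun g F"
    using assms(2) by (intro BfunI) simp
  then show ?thesis
    using bounded_bilinear.Bfun_prod_Zfun[OF bounded_bilinear_mult] assms(1)
    by (simp add: tendsto_Zfun_iff)
qed

lemma eventually_at_right_0_1: "eventually (\<lambda>u. u \<in> {0<..1}) (at_right (0::real))"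
  unfolding eventually_at_right_field by (rule exI[of _ 1]) auto

lemma tendsto_difference_quotient_at_right:
  assumes "(f has_real_derivative D) (at 0)"
  shows "((\<lambda>u. (f u - f 0) / u) \<longlongrightarrow> D) (at_right 0)"
  using assms unfolding DERIV_def by (simp add: tendsto_mono[OF at_le[OF subset_UNIV]])

lemma tendsto_of_cauchy:
  fixes f :: "'a \<Rightarrow> 'b::complete_space"
  assumes "F \<noteq> bot"
    and "\<And>e. 0 < e \<Longrightarrow> \<exists>P. eventually P F \<and> (\<forall>u v. P u \<and> P v \<longrightarrow> dist (f u) (f v) < e)"
  shows "\<exists>l. (f \<longlongrightarrow> l) F"
proof -
  have "cauchy_filter (filtermap f F)"
    unfolding cauchy_filter_metric_filtermap using assms(2) by blast
  moreover have "filtermap f F \<noteq> bot"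
    using assms(1) by (simp add: filtermap_bot_iff)
  ultimately obtain l where "filtermap f F \<le> nhds l"
    using cauchy_filter_complete_converges[OF _ complete_UNIV] by auto
  then show ?thesis
    unfolding filterlim_def by blast
qed

lemma tendsto_Lim_of_ex:
  assumes "F \<noteq> bot" and "\<exists>l. (f \<longlongrightarrow> l) F"
  shows "(f \<longlongrightarrow> Lim F f) F"
  using assms tendsto_Lim[OF assms(1)] by auto

subsection \<open>Doeblin's condition for a stochastic kernel\<close>

definition push_forward :: "('s::finite \<Rightarrow> 's \<Rightarrow> real) \<Rightarrow> ('s \<Rightarrow> real) \<Rightarrow> 's \<Rightarrow> real" where
  "push_forward K d y = (\<Sum>x\<in>UNIV. d x * K x y)"

lemma sum_push_forward:
  assumes "\<And>x. (\<Sum>y\<in>UNIV. K x y) = 1"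
  shows "(\<Sum>y\<in>UNIV. push_forward K d y) = (\<Sum>x\<in>UNIV. d x)"
  unfolding push_forward_def by (subst sum.swap) (simp add: sum_distrib_left[symmetric] assms)

lemma push_forward_diff: "push_forward K (\<lambda>x. d x - d' x) y = push_forward K d y - push_forward K d' y"
  unfolding push_forward_def by (simp add: left_diff_distrib sum_subtractf)

text \<open>Subtracting the common mass \<open>\<epsilon>\<close> at \<open>z\<close> from every row does not change the image of a
  signed vector of total mass zero, and leaves rows of total mass \<open>1 - \<epsilon>\<close>.\<close>

lemma doeblin_contraction:
  fixes K :: "'s::finite \<Rightarrow> 's \<Rightarrow> real"
  assumes nonneg: "\<And>x y. 0 \<le> K x y" and minor: "\<And>x. \<epsilon> \<le> K x z"
    and stoch: "\<And>x. (\<Sum>y\<in>UNIV. K x y) = 1" and mass0: "(\<Sum>x\<in>UNIV. w x) = 0"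
  shows "(\<Sum>y\<in>UNIV. \<bar>push_forward K w y\<bar>) \<le> (1 - \<epsilon>) * (\<Sum>x\<in>UNIV. \<bar>w x\<bar>)"
proof -
  define K' where "K' x y = K x y - (if y = z then \<epsilon> else 0)" for x y
  have K'_nonneg: "0 \<le> K' x y" for x y
    using nonneg minor by (auto simp: K'_def)
  have image_eq: "push_forward K w y = push_forward K' w y" for y
    using mass0
    by (simp add: push_forward_def K'_def right_diff_distrib sum_subtractf sum_distrib_right[symmetric])
  have "(\<Sum>y\<in>UNIV. \<bar>push_forward K w y\<bar>) \<le> (\<Sum>y\<in>UNIV. \<Sum>x\<in>UNIV. \<bar>w x\<bar> * K' x y)"
    unfolding image_eq unfolding push_forward_def
    by (intro sum_mono order.trans[OF sum_abs]) (simp add: abs_mult K'_nonneg)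
  also have "\<dots> = (\<Sum>x\<in>UNIV. \<bar>w x\<bar> * (\<Sum>y\<in>UNIV. K' x y))"
    by (subst sum.swap) (simp add: sum_distrib_left)
  also have "\<dots> = (1 - \<epsilon>) * (\<Sum>x\<in>UNIV. \<bar>w x\<bar>)"
    by (simp add: K'_def sum_subtractf stoch sum_distrib_left mult.commute)
  finally show ?thesis .
qed

lemma doeblin_invariant_unique:
  fixes K :: "'s::finite \<Rightarrow> 's \<Rightarrow> real"
  assumes nonneg: "\<And>x y. 0 \<le> K x y" and minor: "\<And>x. \<epsilon> \<le> K x z" and pos: "0 < \<epsilon>"
    and stoch: "\<And>x. (\<Sum>y\<in>UNIV. K x y) = 1"
    and \<pi>1: "(\<Sum>x\<in>UNIV. \<pi>1 x) = 1" "push_forward K \<pi>1 = \<pi>1"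
    and \<pi>2: "(\<Sum>x\<in>UNIV. \<pi>2 x) = 1" "push_forward K \<pi>2 = \<pi>2"
  shows "\<pi>1 = \<pi>2"
proof -
  define w where "w = (\<lambda>x. \<pi>1 x - \<pi>2 x)"
  have "(\<Sum>x\<in>UNIV. w x) = 0"
    using \<pi>1 \<pi>2 by (simp add: w_def sum_subtractf)
  then have "(\<Sum>y\<in>UNIV. \<bar>push_forward K w y\<bar>) \<le> (1 - \<epsilon>) * (\<Sum>x\<in>UNIV. \<bar>w x\<bar>)"
    by (rule doeblin_contraction[OF nonneg minor stoch])
  moreover have "push_forward K w = w"
    unfolding w_def using \<pi>1(2) \<pi>2(2) by (simp add: push_forward_diff fun_eq_iff)
  ultimately have "(\<Sum>x\<in>UNIV. \<bar>w x\<bar>) \<le> 0"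
    using pos by (simp add: algebra_simps mult_le_0_iff)
  then have "\<forall>x. w x = 0"
    using sum_nonneg_eq_0_iff[of UNIV "\<lambda>x. \<bar>w x\<bar>"] by (simp add: antisym)
  then show ?thesis
    by (auto simp: w_def fun_eq_iff)
qed

lemma doeblin_iterates_convergent:
  fixes K :: "'s::finite \<Rightarrow> 's \<Rightarrow> real"
  assumes nonneg: "\<And>x y. 0 \<le> K x y" and minor: "\<And>x. \<epsilon> \<le> K x z" and pos: "0 < \<epsilon>"
    and stoch: "\<And>x. (\<Sum>y\<in>UNIV. K x y) = 1"
  shows "convergent (\<lambda>k. (push_forward K ^^ k) d y)"
proof -
  define it where "it k = (push_forward K ^^ k) d" for k
  define D where "D k = (\<lambda>y. it (Suc k) y - it k y)" for k
  have \<epsilon>_le_1: "\<epsilon> \<le> 1"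
    using member_le_sum[of z UNIV "K z"] nonneg minor[of z] stoch[of z] by simp
  have D_decay: "(\<Sum>y\<in>UNIV. \<bar>D k y\<bar>) \<le> (1 - \<epsilon>) ^ k * (\<Sum>y\<in>UNIV. \<bar>D 0 y\<bar>)" for k
  proof (induction k)
    case (Suc k)
    have "D (Suc k) = push_forward K (D k)"
      by (simp add: fun_eq_iff D_def it_def push_forward_diff)
    moreover have "(\<Sum>y\<in>UNIV. D k y) = 0"
      by (simp add: D_def it_def sum_subtractf sum_push_forward[OF stoch])
    ultimately have "(\<Sum>y\<in>UNIV. \<bar>D (Suc k) y\<bar>) \<le> (1 - \<epsilon>) * (\<Sum>y\<in>UNIV. \<bar>D k y\<bar>)"
      using doeblin_contraction[OF nonneg minor stoch] by simp
    also have "\<dots> \<le> (1 - \<epsilon>) * ((1 - \<epsilon>) ^ k * (\<Sum>y\<in>UNIV. \<bar>D 0 y\<bar>))"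
      using Suc \<epsilon>_le_1 by (intro mult_left_mono) auto
    finally show ?case
      by simp
  qed simp
  have bound: "norm (D k y) \<le> (\<Sum>y\<in>UNIV. \<bar>D 0 y\<bar>) * (1 - \<epsilon>) ^ k" for k
    using member_le_sum[of y UNIV "\<lambda>y. \<bar>D k y\<bar>"] D_decay[of k] by (simp add: mult.commute)
  have "summable (\<lambda>k. (\<Sum>y\<in>UNIV. \<bar>D 0 y\<bar>) * (1 - \<epsilon>) ^ k)"
    using pos \<epsilon>_le_1 by (intro summable_mult summable_geometric) auto
  then have "summable (\<lambda>k. D k y)"
    by (rule summable_comparison_test'[where N=0]) (use bound in auto)
  then have "(\<lambda>k. it 0 y + (\<Sum>j<k. D j y)) \<longlonglongrightarrow> it 0 y + suminf (\<lambda>k. D k y)"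
    by (intro tendsto_add tendsto_const summable_LIMSEQ)
  moreover have "(\<lambda>k. it k y) = (\<lambda>k. it 0 y + (\<Sum>j<k. D j y))"
  proof
    show "it k y = it 0 y + (\<Sum>j<k. D j y)" for k
      by (induction k) (simp_all add: D_def)
  qed
  ultimately show ?thesis
    unfolding it_def by (metis convergentI)
qed

lemma doeblin_invariant_exists:
  fixes K :: "'s::finite \<Rightarrow> 's \<Rightarrow> real"
  assumes nonneg: "\<And>x y. 0 \<le> K x y" and minor: "\<And>x. \<epsilon> \<le> K x z" and pos: "0 < \<epsilon>"
    and stoch: "\<And>x. (\<Sum>y\<in>UNIV. K x y) = 1"
  shows "\<exists>\<pi>. (\<forall>x. 0 \<le> \<pi> x) \<and> (\<Sum>x\<in>UNIV. \<pi> x) = 1 \<and> push_forward K \<pi> = \<pi>"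
proof -
  define it where "it k = (push_forward K ^^ k) (\<lambda>y. if y = z then 1 else 0)" for k
  define \<pi> where "\<pi> y = lim (\<lambda>k. it k y)" for y
  have lim: "(\<lambda>k. it k y) \<longlonglongrightarrow> \<pi> y" for y
    unfolding \<pi>_def it_def
    using doeblin_iterates_convergent[OF nonneg minor pos stoch] by (simp add: convergent_LIMSEQ_iff)
  have it_nonneg: "0 \<le> it k y" for k y
    by (induction k arbitrary: y) (auto simp: it_def push_forward_def intro!: sum_nonneg mult_nonneg_nonneg nonneg)
  have it_sum: "(\<Sum>y\<in>UNIV. it k y) = 1" for k
    by (induction k) (simp_all add: it_def sum_push_forward[OF stoch])
  have "0 \<le> \<pi> x" for x
    by (rule LIMSEQ_le_const[OF lim]) (simp add: it_nonneg)
  moreover have "(\<Sum>x\<in>UNIV. \<pi> x) = 1"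
  proof -
    have "(\<lambda>k. \<Sum>x\<in>UNIV. it k x) \<longlonglongrightarrow> (\<Sum>x\<in>UNIV. \<pi> x)"
      by (intro tendsto_sum lim)
    then show ?thesis
      using it_sum by (simp add: LIMSEQ_const_iff)
  qed
  moreover have "push_forward K \<pi> y = \<pi> y" for y
  proof -
    have "it (Suc k) y = (\<Sum>x\<in>UNIV. it k x * K x y)" for k
      by (simp add: it_def push_forward_def)
    then have "(\<lambda>k. it (Suc k) y) \<longlonglongrightarrow> push_forward K \<pi> y"
      unfolding push_forward_def by (simp only:) (intro tendsto_sum tendsto_mult lim tendsto_const)
    then show ?thesis
      using LIMSEQ_unique LIMSEQ_Suc[OF lim] by blast
  qed
  ultimately show ?thesis
    by (auto simp: fun_eq_iff)
qed

definition replace :: "('g::finite) event \<Rightarrow> 'g set \<Rightarrow> 'g set" where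
  "replace e x = {h. snd e h \<in> x}"

definition site_prob :: "real \<Rightarrow> real \<Rightarrow> 'g set \<Rightarrow> 'g set \<Rightarrow> 'g event \<Rightarrow> 'g \<Rightarrow> real" where
  "site_prob u \<nu> x y e g =
     (if g \<in> fst e
      then (1 - u) * (if (g \<in> y) = (snd e g \<in> x) then 1 else 0) + u * (if g \<in> y then \<nu> else 1 - \<nu>)
      else (if (g \<in> y) = (g \<in> x) then 1 else 0))"

lemma trans_eq_site_prob:
  "trans p u \<nu> x y = (\<Sum>e\<in>events. p x e * (\<Prod>g\<in>UNIV. site_prob u \<nu> x y e g))"
  unfolding trans_def site_prob_def by (rule sum.cong) (simp_all add: case_prod_beta)

lemma replacement_ruleD:
  assumes "replacement_rule p"
  shows "\<And>x e. e \<in> events \<Longrightarrow> 0 \<le> p x e" and "\<And>x. (\<Sum>e\<in>events. p x e) = 1"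
  using assms unfolding replacement_rule_def by auto

lemma sum_prod_site_prob:
  fixes e :: "('g::finite) event"
  shows "(\<Sum>y\<in>UNIV. \<Prod>g\<in>UNIV. site_prob u \<nu> x y e g) = 1"
proof -
  define P where "P g = (if g \<in> fst e then (1 - u) * (if snd e g \<in> x then 1 else 0) + u * \<nu>
      else if g \<in> x then 1 else 0)" for g
  define N where "N g = (if g \<in> fst e then (1 - u) * (if snd e g \<in> x then 0 else 1) + u * (1 - \<nu>)
      else if g \<in> x then 0 else 1)" for g
  have "(\<Prod>g\<in>UNIV. site_prob u \<nu> x y e g) = (\<Prod>g\<in>UNIV. if g \<in> y then P g else N g)" for y
    by (rule prod.cong) (auto simp: site_prob_def P_def N_def)
  then have "(\<Sum>y\<in>UNIV. \<Prod>g\<in>UNIV. site_prob u \<nu> x y e g) = (\<Prod>g\<in>UNIV. P g + N g)"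
    using sum_subsets_prod_if[of P N] by simp
  also have "\<dots> = 1"
    by (rule prod.neutral) (auto simp: P_def N_def algebra_simps)
  finally show ?thesis .
qed

lemma sum_trans:
  assumes "replacement_rule p"
  shows "(\<Sum>y\<in>UNIV. trans p u \<nu> x y) = 1"
proof -
  have "(\<Sum>y\<in>UNIV. trans p u \<nu> x y) = (\<Sum>e\<in>events. p x e * (\<Sum>y\<in>UNIV. \<Prod>g\<in>UNIV. site_prob u \<nu> x y e g))"
    unfolding trans_eq_site_prob by (simp add: sum_distrib_left sum.swap[of _ UNIV])
  then show ?thesis
    using replacement_ruleD[OF assms] by (simp add: sum_prod_site_prob)
qed

lemma site_prob_nonneg: "u \<in> {0..1} \<Longrightarrow> \<nu> \<in> {0..1} \<Longrightarrow> 0 \<le> site_prob u \<nu> x y e g"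
  unfolding site_prob_def by auto

lemma trans_nonneg:
  assumes "replacement_rule p" "u \<in> {0..1}" "\<nu> \<in> {0..1}"
  shows "0 \<le> trans p u \<nu> x y"
  unfolding trans_eq_site_prob using replacement_ruleD[OF assms(1)] site_prob_nonneg[OF assms(2,3)]
  by (intro sum_nonneg mult_nonneg_nonneg prod_nonneg) auto

lemma trans_no_mutation:
  "trans p 0 \<nu> x y = (\<Sum>e\<in>events. p x e * (if y = replace e x then 1 else 0))"
  unfolding trans_eq_site_prob
proof (rule sum.cong)
  fix e :: "'a event"
  assume "e \<in> events"
  then have "(\<Prod>g\<in>UNIV. site_prob 0 \<nu> x y e g) = (\<Prod>g\<in>UNIV. if (g \<in> y) = (snd e g \<in> x) then 1 else 0)"
    by (intro prod.cong) (auto simp: site_prob_def events_def split: prod.splits)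
  also have "\<dots> = (if y = replace e x then 1 else 0)"
    by (subst prod_if_one_zero) (auto simp: replace_def)
  finally show "p x e * (\<Prod>g\<in>UNIV. site_prob 0 \<nu> x y e g) = p x e * (if y = replace e x then 1 else 0)"
    by simp
qed simp

lemma trans_no_mutation_ge:
  assumes "replacement_rule p" "e \<in> events"
  shows "p x e \<le> trans p 0 \<nu> x (replace e x)"
proof -
  have "p x e = p x e * (if replace e x = replace e x then 1 else 0)"
    by simp
  also have "\<dots> \<le> trans p 0 \<nu> x (replace e x)"
    unfolding trans_no_mutation
    by (rule member_le_sum[where f="\<lambda>e'. p x e' * (if replace e x = replace e' x then 1 else 0)"])
       (use assms replacement_ruleD[OF assms(1)] in auto)
  finally show ?thesis .
qed

lemma trans_mutation_ge:
  fixes x :: "'g::finite set"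
  assumes "replacement_rule p" "e \<in> events" "u \<in> {0..1}" "\<nu> \<in> {0..1}"
  shows "p x e * (u * (1 - \<nu>)) ^ CARD('g) \<le> trans p u \<nu> x (x - fst e)"
proof -
  have "u * (1 - \<nu>) \<le> site_prob u \<nu> x (x - fst e) e g" for g
    using assms(3,4) mult_mono[of u 1 "1 - \<nu>" 1] by (auto simp: site_prob_def)
  then have "(\<Prod>g\<in>(UNIV::'g set). u * (1 - \<nu>)) \<le> (\<Prod>g\<in>UNIV. site_prob u \<nu> x (x - fst e) e g)"
    using assms(3,4) by (intro prod_mono) auto
  then have "(u * (1 - \<nu>)) ^ CARD('g) \<le> (\<Prod>g\<in>UNIV. site_prob u \<nu> x (x - fst e) e g)"
    by simp
  then have "p x e * (u * (1 - \<nu>)) ^ CARD('g) \<le> p x e * (\<Prod>g\<in>UNIV. site_prob u \<nu> x (x - fst e) e g)"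
    using replacement_ruleD(1)[OF assms(1,2)] by (rule mult_left_mono)
  also have "\<dots> \<le> trans p u \<nu> x (x - fst e)"
    unfolding trans_eq_site_prob
    by (rule member_le_sum[where f="\<lambda>e'. p x e' * (\<Prod>g\<in>UNIV. site_prob u \<nu> x (x - fst e) e' g)"])
       (use assms replacement_ruleD[OF assms(1)] site_prob_nonneg[OF assms(3,4)]
         in \<open>auto intro!: mult_nonneg_nonneg prod_nonneg\<close>)
  finally show ?thesis .
qed

lemma replace_monomorphic: "x \<in> {{}, UNIV} \<Longrightarrow> replace e x = x"
  by (auto simp: replace_def)

lemma trans_no_mutation_monomorphic:
  assumes "replacement_rule p" "x \<in> {{}, UNIV}"
  shows "trans p 0 \<nu> x y = (if y = x then 1 else 0)"
  unfolding trans_no_mutation replace_monomorphic[OF assms(2)]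
  using replacement_ruleD(2)[OF assms(1)] by (simp add: sum_distrib_right[symmetric])

lemma transn_add:
  "transn p u \<nu> (s + t) x y = (\<Sum>z\<in>UNIV. transn p u \<nu> s x z * transn p u \<nu> t z y)"
proof (induction t arbitrary: y)
  case (Suc t)
  have "transn p u \<nu> (s + Suc t) x y
      = (\<Sum>w\<in>UNIV. \<Sum>z\<in>UNIV. transn p u \<nu> s x z * transn p u \<nu> t z w * trans p u \<nu> w y)"
    by (simp add: Suc sum_distrib_right)
  also have "\<dots> = (\<Sum>z\<in>UNIV. transn p u \<nu> s x z * transn p u \<nu> (Suc t) z y)"
    by (subst sum.swap) (simp add: sum_distrib_left mult.assoc)
  finally show ?case .
qed simp

lemma transn_Suc_left:
  "transn p u \<nu> (Suc t) x y = (\<Sum>z\<in>UNIV. trans p u \<nu> x z * transn p u \<nu> t z y)"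
  using transn_add[of p u \<nu> "Suc 0" t x y] by simp

lemma transn_nonneg:
  assumes "replacement_rule p" "u \<in> {0..1}" "\<nu> \<in> {0..1}"
  shows "0 \<le> transn p u \<nu> t x y"
  by (induction t arbitrary: y) (auto intro!: sum_nonneg mult_nonneg_nonneg trans_nonneg[OF assms])

lemma sum_transn:
  assumes "replacement_rule p"
  shows "(\<Sum>y\<in>UNIV. transn p u \<nu> t x y) = 1"
proof (induction t)
  case (Suc t)
  have "(\<Sum>y\<in>UNIV. transn p u \<nu> (Suc t) x y)
      = (\<Sum>z\<in>UNIV. transn p u \<nu> t x z * (\<Sum>y\<in>UNIV. trans p u \<nu> z y))"
    by (simp only: transn.simps sum_distrib_left) (rule sum.swap)
  then show ?case using Suc by (simp add: sum_trans[OF assms])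
qed simp

lemma transn_le_1:
  assumes "replacement_rule p" "u \<in> {0..1}" "\<nu> \<in> {0..1}"
  shows "transn p u \<nu> t x y \<le> 1"
  using member_le_sum[of y UNIV "transn p u \<nu> t x"] transn_nonneg[OF assms] sum_transn[OF assms(1)]
  by simp

lemma transn_no_mutation_monomorphic:
  assumes "replacement_rule p" "x \<in> {{}, UNIV}"
  shows "transn p 0 \<nu> t x y = (if y = x then 1 else 0)"
  by (induction t arbitrary: y) (simp_all add: trans_no_mutation_monomorphic[OF assms])

lemma fold_replace: "fold replace es x = {h. foldr (\<lambda>e f. snd e \<circ> f) es id h \<in> x}"
  by (induction es arbitrary: x) (auto simp: replace_def)

lemma transn_fold_ge:
  assumes "replacement_rule p" "u \<in> {0..1}" "\<nu> \<in> {0..1}" "0 \<le> w"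
    and "\<And>x e. e \<in> set es \<Longrightarrow> w \<le> trans p u \<nu> x (f e x)"
  shows "w ^ length es \<le> transn p u \<nu> (length es) x (fold f es x)"
  using assms(5)
proof (induction es arbitrary: x)
  case (Cons e es)
  have "w ^ length (e # es) \<le> trans p u \<nu> x (f e x) * transn p u \<nu> (length es) (f e x) (fold f es (f e x))"
    using Cons assms(4) by (auto intro!: mult_mono trans_nonneg[OF assms(1-3)])
  also have "\<dots> \<le> (\<Sum>z\<in>UNIV. trans p u \<nu> x z * transn p u \<nu> (length es) z (fold f es (f e x)))"
    by (rule member_le_sum)
       (auto intro!: mult_nonneg_nonneg trans_nonneg[OF assms(1-3)] transn_nonneg[OF assms(1-3)])
  also have "\<dots> = transn p u \<nu> (length (e # es)) x (fold f (e # es) x)"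
    by (simp only: length_Cons transn_Suc_left fold_simps)
  finally show ?case .
qed simp

definition polymorphic :: "('g::finite) set set" where
  "polymorphic = UNIV - {{}, UNIV}"

lemma sum_UNIV_split_polymorphic:
  fixes f :: "('g::finite) set \<Rightarrow> 'a::comm_monoid_add"
  shows "(\<Sum>x\<in>UNIV. f x) = f {} + f UNIV + (\<Sum>x\<in>polymorphic. f x)"
proof -
  have "(\<Sum>x\<in>UNIV. f x) = (\<Sum>x\<in>insert {} (insert UNIV polymorphic). f x)"
    by (rule sum.cong) (auto simp: polymorphic_def)
  also have "\<dots> = f {} + (f UNIV + (\<Sum>x\<in>polymorphic. f x))"
    by (simp add: polymorphic_def)
  finally show ?thesis
    by (simp add: add.assoc)
qed

lemma singleton_polymorphic:
  fixes a b g :: "'g::finite"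
  assumes "a \<noteq> b"
  shows "{g} \<in> polymorphic"
proof -
  have "{g} \<noteq> UNIV"
  proof
    assume "{g} = UNIV"
    then have "a = g" "b = g"
      by auto
    then show False
      using assms by simp
  qed
  then show ?thesis
    by (simp add: polymorphic_def)
qed

lemma stationary_transn:
  assumes "stationary p u \<nu> \<pi>"
  shows "(\<Sum>x\<in>UNIV. \<pi> x * transn p u \<nu> t x y) = \<pi> y"
proof (induction t arbitrary: y)
  case (Suc t)
  have "(\<Sum>x\<in>UNIV. \<pi> x * transn p u \<nu> (Suc t) x y)
      = (\<Sum>z\<in>UNIV. (\<Sum>x\<in>UNIV. \<pi> x * transn p u \<nu> t x z) * trans p u \<nu> z y)"
    by (simp add: sum_distrib_left sum_distrib_right mult.assoc) (rule sum.swap)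
  then show ?case
    using Suc assms by (simp add: stationary_def)
qed simp

lemma push_forward_trans_transn:
  "push_forward (transn p u \<nu> t) (push_forward (trans p u \<nu>) \<pi>)
    = push_forward (trans p u \<nu>) (push_forward (transn p u \<nu> t) \<pi>)"
proof
  fix y
  have "push_forward (transn p u \<nu> t) (push_forward (trans p u \<nu>) \<pi>) y
      = (\<Sum>z\<in>UNIV. \<pi> z * transn p u \<nu> (Suc t) z y)"
    unfolding push_forward_def transn_Suc_left
    by (simp add: sum_distrib_left sum_distrib_right mult.assoc) (rule sum.swap)
  also have "\<dots> = push_forward (trans p u \<nu>) (push_forward (transn p u \<nu> t) \<pi>) y"
    unfolding push_forward_def transn.simps
    by (simp add: sum_distrib_left sum_distrib_right mult.assoc) (rule sum.swap)
  finally show "push_forward (transn p u \<nu> t) (push_forward (trans p u \<nu>) \<pi>) y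
      = push_forward (trans p u \<nu>) (push_forward (transn p u \<nu> t) \<pi>) y" .
qed

lemma fold_diff_fst: "fold (\<lambda>e x. x - fst e) es x = x - (\<Union>e\<in>set es. fst e)"
  by (induction es arbitrary: x) auto

lemma foldr_snd_outside:
  assumes "set es \<subseteq> events" "h \<notin> (\<Union>e\<in>set es. fst e)"
  shows "foldr (\<lambda>e f. snd e \<circ> f) es id h = h"
  using assms by (induction es) (auto simp: events_def)

lemma ee_eq_sum_events: "ee p g h x = (\<Sum>e\<in>events. if h \<in> fst e \<and> snd e h = g then p x e else 0)"
  unfolding ee_def by (subst sum.inter_filter[symmetric]) (auto simp: case_prod_beta intro!: sum.cong)

lemma dd_eq_sum_events: "dd p g x = (\<Sum>e\<in>events. if g \<in> fst e then p x e else 0)"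
proof -
  have "dd p g x = (\<Sum>e\<in>events. \<Sum>h\<in>UNIV. if g \<in> fst e \<and> snd e g = h then p x e else 0)"
    unfolding dd_def ee_eq_sum_events by (rule sum.swap)
  also have "\<dots> = (\<Sum>e\<in>events. if g \<in> fst e then p x e else 0)"
    by (rule sum.cong) auto
  finally show ?thesis .
qed

lemma dd_nonneg: "replacement_rule p \<Longrightarrow> 0 \<le> dd p g x"
  unfolding dd_eq_sum_events by (auto intro!: sum_nonneg dest: replacement_ruleD(1))

lemma btot_eq_sum_dd: "btot p x = (\<Sum>g\<in>UNIV. dd p g x)"
  unfolding btot_def bb_def dd_def by (rule sum.swap)

lemma sum_ee_in: "(\<Sum>g\<in>x. ee p g h x) = (\<Sum>e\<in>events. if h \<in> fst e \<and> snd e h \<in> x then p x e else 0)"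
proof -
  have "(\<Sum>g\<in>x. ee p g h x) = (\<Sum>e\<in>events. \<Sum>g\<in>x. if h \<in> fst e \<and> snd e h = g then p x e else 0)"
    unfolding ee_eq_sum_events by (rule sum.swap)
  also have "\<dots> = (\<Sum>e\<in>events. if h \<in> fst e \<and> snd e h \<in> x then p x e else 0)"
  proof (rule sum.cong)
    fix e :: "'a event"
    have "(\<Sum>g\<in>x. if h \<in> fst e \<and> snd e h = g then p x e else 0)
        = (\<Sum>g\<in>x. if snd e h = g then (if h \<in> fst e then p x e else 0) else 0)"
      by (rule sum.cong) auto
    then show "(\<Sum>g\<in>x. if h \<in> fst e \<and> snd e h = g then p x e else 0)
        = (if h \<in> fst e \<and> snd e h \<in> x then p x e else 0)"
      by simp
  qed simp
  finally show ?thesis .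
qed

lemma sum_bb_eq: "(\<Sum>g\<in>x. bb p g x) = (\<Sum>h\<in>UNIV. \<Sum>e\<in>events. if h \<in> fst e \<and> snd e h \<in> x then p x e else 0)"
  unfolding bb_def sum_ee_in[symmetric] by (rule sum.swap)

lemma sum_dd_eq: "(\<Sum>g\<in>x. dd p g x) = (\<Sum>h\<in>UNIV. \<Sum>e\<in>events. if h \<in> fst e \<and> h \<in> x then p x e else 0)"
proof -
  have "(\<Sum>e\<in>events. if h \<in> fst e \<and> h \<in> x then p x e else 0) = (if h \<in> x then dd p h x else 0)" for h
    unfolding dd_eq_sum_events by (auto intro!: sum.cong)
  then show ?thesis
    by (simp add: sum.If_cases Int_def)
qed

subsection \<open>Consequences of the Fixation Axiom\<close>

locale fixation_model =
  fixes p :: "('g::finite) rule" and \<nu> :: real and g0 :: 'g and es :: "'g event list"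
  assumes rule: "replacement_rule p"
    and nu_pos: "0 < \<nu>" and nu_less_1: "\<nu> < 1"
    and es_nonempty: "es \<noteq> []"
    and es_events: "set es \<subseteq> events"
    and es_pos: "\<And>e x. e \<in> set es \<Longrightarrow> 0 < p x e"
    and es_replace_g0: "\<exists>e\<in>set es. g0 \<in> fst e"
    and es_fix_g0: "\<And>h. foldr (\<lambda>e f. snd e \<circ> f) es id h = g0"
begin

lemma nu_range: "\<nu> \<in> {0..1}"
  using nu_pos nu_less_1 by simp

definition min_prob :: real where
  "min_prob = Min ((\<lambda>(x, e). p x e) ` (UNIV \<times> set es))"

lemma min_prob_le: "e \<in> set es \<Longrightarrow> min_prob \<le> p x e"
  unfolding min_prob_def by (rule Min_le) auto

lemma min_prob_pos: "0 < min_prob"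
  unfolding min_prob_def using es_nonempty es_pos by auto

lemma es_cover: "(\<Union>e\<in>set es. fst e) = UNIV"
proof (rule ccontr)
  assume "(\<Union>e\<in>set es. fst e) \<noteq> UNIV"
  then obtain h where h: "h \<notin> (\<Union>e\<in>set es. fst e)"
    by blast
  then have "h = g0"
    using foldr_snd_outside[OF es_events h] es_fix_g0 by simp
  then show False
    using h es_replace_g0 by auto
qed

lemma fold_replace_es: "fold replace es x = (if g0 \<in> x then UNIV else {})"
  unfolding fold_replace es_fix_g0 by auto

definition fix_bound :: real where
  "fix_bound = min_prob ^ length es"

lemma fix_bound_pos: "0 < fix_bound"
  using min_prob_pos by (simp add: fix_bound_def)

lemma fix_bound_le_1: "fix_bound \<le> 1"
proof -
  obtain e where e: "e \<in> set es"
    using es_nonempty by (cases es) auto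
  have "p {} e \<le> (\<Sum>e\<in>events. p {} e)"
    by (rule member_le_sum) (use e es_events replacement_ruleD[OF rule] in auto)
  then have "min_prob \<le> 1"
    using min_prob_le[OF e, of "{}"] replacement_ruleD(2)[OF rule] by simp
  then show ?thesis
    unfolding fix_bound_def using min_prob_pos by (simp add: power_le_one)
qed

lemma transn_fold_replace_ge: "fix_bound \<le> transn p 0 \<nu> (length es) x (fold replace es x)"
  unfolding fix_bound_def
proof (rule transn_fold_ge[OF rule _ nu_range])
  fix x e
  assume "e \<in> set es"
  then show "min_prob \<le> trans p 0 \<nu> x (replace e x)"
    using min_prob_le trans_no_mutation_ge[OF rule] es_events by (meson order.trans subsetD)
qed (use min_prob_pos in auto)

lemma sum_polymorphic_transn_le: "(\<Sum>y\<in>polymorphic. transn p 0 \<nu> (length es) x y) \<le> 1 - fix_bound"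
proof -
  let ?z = "fold replace es x"
  have "?z \<notin> polymorphic"
    unfolding fold_replace_es polymorphic_def by auto
  then have "(\<Sum>y\<in>polymorphic. transn p 0 \<nu> (length es) x y) + transn p 0 \<nu> (length es) x ?z
      = (\<Sum>y\<in>insert ?z polymorphic. transn p 0 \<nu> (length es) x y)"
    by simp
  also have "\<dots> \<le> (\<Sum>y\<in>UNIV. transn p 0 \<nu> (length es) x y)"
    by (rule sum_mono2) (use transn_nonneg[OF rule _ nu_range] in auto)
  finally show ?thesis
    using transn_fold_replace_ge[of x] sum_transn[OF rule] by simp
qed

text \<open>Mutating every replaced site to \<open>a\<close> along \<open>es\<close> empties the population, since \<open>es\<close>
  replaces every site.\<close>

lemma transn_empty_ge:
  assumes "u \<in> {0..1}"
  shows "(min_prob * (u * (1 - \<nu>)) ^ CARD('g)) ^ length es \<le> transn p u \<nu> (length es) x {}"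
proof -
  have "(min_prob * (u * (1 - \<nu>)) ^ CARD('g)) ^ length es
      \<le> transn p u \<nu> (length es) x (fold (\<lambda>e x. x - fst e) es x)"
  proof (rule transn_fold_ge[OF rule assms nu_range])
    fix x e
    assume e: "e \<in> set es"
    have "min_prob * (u * (1 - \<nu>)) ^ CARD('g) \<le> p x e * (u * (1 - \<nu>)) ^ CARD('g)"
      using min_prob_le[OF e] assms nu_less_1 by (intro mult_right_mono) auto
    also have "\<dots> \<le> trans p u \<nu> x (x - fst e)"
      using e es_events by (intro trans_mutation_ge[OF rule _ assms nu_range]) auto
    finally show "min_prob * (u * (1 - \<nu>)) ^ CARD('g) \<le> trans p u \<nu> x (x - fst e)" .
  qed (use min_prob_pos nu_less_1 assms in auto)
  then show ?thesis
    unfolding fold_diff_fst es_cover by simp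
qed

lemma ex1_stationary:
  assumes u: "u \<in> {0<..1}"
  shows "\<exists>!\<pi>. stationary p u \<nu> \<pi>"
proof -
  define K where "K = transn p u \<nu> (length es)"
  define \<epsilon> where "\<epsilon> = (min_prob * (u * (1 - \<nu>)) ^ CARD('g)) ^ length es"
  have u': "u \<in> {0..1}"
    using u by simp
  have K_nonneg: "0 \<le> K x y" for x y
    unfolding K_def by (rule transn_nonneg[OF rule u' nu_range])
  have K_minor: "\<epsilon> \<le> K x {}" for x
    unfolding K_def \<epsilon>_def by (rule transn_empty_ge[OF u'])
  have K_stoch: "(\<Sum>y\<in>UNIV. K x y) = 1" for x
    unfolding K_def by (rule sum_transn[OF rule])
  have \<epsilon>_pos: "0 < \<epsilon>"
    using min_prob_pos u nu_less_1 by (simp add: \<epsilon>_def)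
  note K_unique = doeblin_invariant_unique[where K=K, OF K_nonneg K_minor \<epsilon>_pos K_stoch]
  obtain \<pi> where \<pi>: "\<forall>x. 0 \<le> \<pi> x" "(\<Sum>x\<in>UNIV. \<pi> x) = 1" "push_forward K \<pi> = \<pi>"
    using doeblin_invariant_exists[where K=K, OF K_nonneg K_minor \<epsilon>_pos K_stoch] by (elim exE conjE)
  have "(\<Sum>x\<in>UNIV. push_forward (trans p u \<nu>) \<pi> x) = 1"
    using \<pi>(2) by (simp add: sum_push_forward sum_trans[OF rule])
  moreover have "push_forward K (push_forward (trans p u \<nu>) \<pi>) = push_forward (trans p u \<nu>) \<pi>"
    using \<pi>(3) unfolding K_def by (simp add: push_forward_trans_transn)
  ultimately have "push_forward (trans p u \<nu>) \<pi> = \<pi>"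
    using K_unique \<pi>(2,3) by blast
  then have stat: "stationary p u \<nu> \<pi>"
    using \<pi>(1,2) by (simp add: stationary_def push_forward_def fun_eq_iff)
  show ?thesis
  proof (rule ex1I[where P="stationary p u \<nu>", OF stat])
    fix \<sigma>
    assume \<sigma>: "stationary p u \<nu> \<sigma>"
    then have "(\<Sum>x\<in>UNIV. \<sigma> x) = 1"
      by (simp add: stationary_def)
    moreover have "push_forward K \<sigma> = \<sigma>"
      using stationary_transn[OF \<sigma>] by (simp add: K_def push_forward_def fun_eq_iff)
    ultimately show "\<sigma> = \<pi>"
      using K_unique \<pi>(2,3) by blast
  qed
qed

lemma stationary_pi_MSS: "u \<in> {0<..1} \<Longrightarrow> stationary p u \<nu> (pi_MSS p u \<nu>)"
  unfolding pi_MSS_def by (rule theI'[OF ex1_stationary])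

lemma dd_g0_pos: "0 < dd p g0 x"
proof -
  obtain e where e: "e \<in> set es" "g0 \<in> fst e"
    using es_replace_g0 by blast
  have "p x e \<le> dd p g0 x"
    unfolding dd_eq_sum_events
    using member_le_sum[of e events "\<lambda>e. if g0 \<in> fst e then p x e else 0"] e es_events
      replacement_ruleD(1)[OF rule]
    by auto
  then show ?thesis
    using es_pos[OF e(1), of x] by linarith
qed

lemma btot_pos: "0 < btot p x"
proof -
  have "dd p g0 x \<le> btot p x"
    unfolding btot_eq_sum_dd by (rule member_le_sum) (auto intro: dd_nonneg[OF rule])
  then show ?thesis
    using dd_g0_pos[of x] by linarith
qed

end

lemma site_prob_affine:
  "site_prob u \<nu> x y e g = site_prob 0 \<nu> x y e g + u * (site_prob 1 \<nu> x y e g - site_prob 0 \<nu> x y e g)"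
  unfolding site_prob_def by (auto simp: algebra_simps)

lemma has_real_derivative_site_prob:
  "((\<lambda>u. site_prob u \<nu> x y e g) has_real_derivative (site_prob 1 \<nu> x y e g - site_prob 0 \<nu> x y e g)) (at v)"
  by (subst site_prob_affine[abs_def]) (auto intro!: derivative_eq_intros)

definition trans_deriv :: "('g::finite) rule \<Rightarrow> real \<Rightarrow> 'g set \<Rightarrow> 'g set \<Rightarrow> real" where
  "trans_deriv p \<nu> x y = (\<Sum>e\<in>events. p x e *
     (\<Sum>g\<in>UNIV. (site_prob 1 \<nu> x y e g - site_prob 0 \<nu> x y e g) * (\<Prod>j\<in>UNIV - {g}. site_prob 0 \<nu> x y e j)))"

lemma has_real_derivative_trans:
  "((\<lambda>u. trans p u \<nu> x y) has_real_derivative trans_deriv p \<nu> x y) (at 0)"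
  unfolding trans_eq_site_prob[abs_def] trans_deriv_def
  by (intro DERIV_sum DERIV_cmult has_field_derivative_prod has_real_derivative_site_prob)

lemma field_differentiable_transn: "(\<lambda>u. transn p u \<nu> t x y) field_differentiable (at 0)"
proof (induction t arbitrary: y)
  case 0
  show ?case
    by simp
next
  case (Suc t)
  have "(\<lambda>u. trans p u \<nu> z y) field_differentiable (at 0)" for z
    using has_real_derivative_trans field_differentiable_def by blast
  then show ?case
    unfolding transn.simps by (intro field_differentiable_sum field_differentiable_mult Suc)
qed

lemma tendsto_transn: "((\<lambda>u. transn p u \<nu> t x y) \<longlongrightarrow> transn p 0 \<nu> t x y) (at_right 0)"
  using field_differentiable_imp_continuous_at[OF field_differentiable_transn]
  unfolding continuous_at by (rule tendsto_mono[OF at_le[OF subset_UNIV]])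

lemma tendsto_transn_quotient:
  assumes "replacement_rule p" "x \<in> {{}, UNIV}" "y \<noteq> x"
  shows "((\<lambda>u. transn p u \<nu> t x y / u) \<longlongrightarrow> deriv (\<lambda>u. transn p u \<nu> t x y) 0) (at_right 0)"
  using tendsto_difference_quotient_at_right
    [OF field_differentiable_transn[of p \<nu> t x y, unfolded DERIV_deriv_iff_field_differentiable[symmetric]]]
  by (simp add: transn_no_mutation_monomorphic[OF assms(1,2)] assms(3))

lemma sum_trans_deriv:
  assumes "replacement_rule p"
  shows "(\<Sum>y\<in>UNIV. trans_deriv p \<nu> x y) = 0"
proof -
  have "((\<lambda>u. \<Sum>y\<in>UNIV. trans p u \<nu> x y) has_real_derivative (\<Sum>y\<in>UNIV. trans_deriv p \<nu> x y)) (at 0)"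
    by (intro DERIV_sum has_real_derivative_trans)
  then show ?thesis
    unfolding sum_trans[OF assms] using DERIV_const DERIV_unique by blast
qed

lemma trans_deriv_empty:
  assumes "y \<noteq> {}"
  shows "trans_deriv p \<nu> {} y = \<nu> * (\<Sum>g\<in>UNIV. if y = {g} then dd p g {} else 0)"
proof -
  have "site_prob 0 \<nu> {} y e j = (if j \<notin> y then 1 else 0)" for e j
    by (simp add: site_prob_def)
  then have "(\<Prod>j\<in>UNIV - {g}. site_prob 0 \<nu> {} y e j) = (if y = {g} then 1 else 0)" for e g
    using assms by (auto simp: prod_if_one_zero)
  then have "trans_deriv p \<nu> {} y
      = (\<Sum>e\<in>events. p {} e * (\<Sum>g\<in>UNIV. if y = {g} \<and> g \<in> fst e then \<nu> else 0))"
    unfolding trans_deriv_def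
    by (intro sum.cong refl arg_cong2[where f="(*)"]) (auto simp: site_prob_def)
  also have "\<dots> = (\<Sum>g\<in>UNIV. \<Sum>e\<in>events. if y = {g} \<and> g \<in> fst e then \<nu> * p {} e else 0)"
    by (subst sum.swap) (auto simp: sum_distrib_left intro!: sum.cong)
  also have "\<dots> = \<nu> * (\<Sum>g\<in>UNIV. if y = {g} then dd p g {} else 0)"
    unfolding dd_eq_sum_events by (auto simp: sum_distrib_left intro!: sum.cong)
  finally show ?thesis .
qed

lemma trans_deriv_UNIV:
  assumes "y \<noteq> UNIV"
  shows "trans_deriv p \<nu> UNIV y = (1 - \<nu>) * (\<Sum>g\<in>UNIV. if y = UNIV - {g} then dd p g UNIV else 0)"
proof -
  have "site_prob 0 \<nu> UNIV y e j = (if j \<in> y then 1 else 0)" for e j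
    by (simp add: site_prob_def)
  then have "(\<Prod>j\<in>UNIV - {g}. site_prob 0 \<nu> UNIV y e j) = (if y = UNIV - {g} then 1 else 0)" for e g
    using assms by (auto simp: prod_if_one_zero)
  then have "trans_deriv p \<nu> UNIV y
      = (\<Sum>e\<in>events. p UNIV e * (\<Sum>g\<in>UNIV. if y = UNIV - {g} \<and> g \<in> fst e then 1 - \<nu> else 0))"
    unfolding trans_deriv_def
    by (intro sum.cong refl arg_cong2[where f="(*)"]) (auto simp: site_prob_def)
  also have "\<dots> = (\<Sum>g\<in>UNIV. \<Sum>e\<in>events.
      if y = UNIV - {g} \<and> g \<in> fst e then (1 - \<nu>) * p UNIV e else 0)"
    by (subst sum.swap) (auto simp: sum_distrib_left intro!: sum.cong)
  also have "\<dots> = (1 - \<nu>) * (\<Sum>g\<in>UNIV. if y = UNIV - {g} then dd p g UNIV else 0)"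
    unfolding dd_eq_sum_events by (auto simp: sum_distrib_left intro!: sum.cong)
  finally show ?thesis .
qed

definition drift :: "('g::finite) rule \<Rightarrow> real \<Rightarrow> 'g set \<Rightarrow> ('g set \<Rightarrow> real) \<Rightarrow> real" where
  "drift p \<nu> x h = (\<Sum>y\<in>UNIV. trans_deriv p \<nu> x y * h y)"

lemma tendsto_drift:
  "((\<lambda>u. (\<Sum>y\<in>UNIV. (trans p u \<nu> x y - trans p 0 \<nu> x y) * h y) / u) \<longlongrightarrow> drift p \<nu> x h) (at_right 0)"
proof -
  have "((\<lambda>u. (trans p u \<nu> x y - trans p 0 \<nu> x y) / u * h y) \<longlongrightarrow> trans_deriv p \<nu> x y * h y) (at_right 0)"
    for y
    by (intro tendsto_mult_right tendsto_difference_quotient_at_right has_real_derivative_trans)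
  then show ?thesis
    unfolding sum_divide_distrib drift_def by (simp add: tendsto_sum)
qed

lemma drift_eq_sum_differences:
  assumes "replacement_rule p"
  shows "drift p \<nu> x h = (\<Sum>y\<in>UNIV. trans_deriv p \<nu> x y * (h y - h x))"
proof -
  have "(\<Sum>y\<in>UNIV. trans_deriv p \<nu> x y * (h y - h x))
      = (\<Sum>y\<in>UNIV. trans_deriv p \<nu> x y * h y) - (\<Sum>y\<in>UNIV. trans_deriv p \<nu> x y) * h x"
    by (simp add: right_diff_distrib sum_subtractf sum_distrib_right)
  then show ?thesis
    by (simp add: drift_def sum_trans_deriv[OF assms])
qed

lemma drift_empty:
  assumes "replacement_rule p"
  shows "drift p \<nu> {} h = \<nu> * (\<Sum>g\<in>UNIV. dd p g {} * (h {g} - h {}))"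
proof -
  have "trans_deriv p \<nu> {} y * (h y - h {})
      = \<nu> * (\<Sum>g\<in>UNIV. if y = {g} then dd p g {} * (h {g} - h {}) else 0)" for y
    by (cases "y = {}")
       (simp_all add: trans_deriv_empty sum_distrib_right if_distrib[of "\<lambda>z. z * _"] cong: if_cong)
  then have "drift p \<nu> {} h
      = \<nu> * (\<Sum>y\<in>UNIV. \<Sum>g\<in>UNIV. if y = {g} then dd p g {} * (h {g} - h {}) else 0)"
    by (simp add: drift_eq_sum_differences[OF assms] sum_distrib_left)
  also have "\<dots> = \<nu> * (\<Sum>g\<in>UNIV. \<Sum>y\<in>UNIV. if y = {g} then dd p g {} * (h {g} - h {}) else 0)"
    by (subst sum.swap) (rule refl)
  finally show ?thesis
    by simp
qed

lemma drift_UNIV: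
  assumes "replacement_rule p"
  shows "drift p \<nu> UNIV h = (1 - \<nu>) * (\<Sum>g\<in>UNIV. dd p g UNIV * (h (UNIV - {g}) - h UNIV))"
proof -
  have "trans_deriv p \<nu> UNIV y * (h y - h UNIV)
      = (1 - \<nu>) * (\<Sum>g\<in>UNIV. if y = UNIV - {g} then dd p g UNIV * (h (UNIV - {g}) - h UNIV) else 0)"
    for y
    by (cases "y = UNIV")
       (simp_all add: trans_deriv_UNIV sum_distrib_right if_distrib[of "\<lambda>z. z * _"] cong: if_cong)
  then have "drift p \<nu> UNIV h
      = (1 - \<nu>) * (\<Sum>y\<in>UNIV. \<Sum>g\<in>UNIV.
          if y = UNIV - {g} then dd p g UNIV * (h (UNIV - {g}) - h UNIV) else 0)"
    by (simp add: drift_eq_sum_differences[OF assms] sum_distrib_left)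
  also have "\<dots> = (1 - \<nu>) * (\<Sum>g\<in>UNIV. \<Sum>y\<in>UNIV.
      if y = UNIV - {g} then dd p g UNIV * (h (UNIV - {g}) - h UNIV) else 0)"
    by (subst sum.swap) (rule refl)
  finally show ?thesis
    by simp
qed

subsection \<open>Absorption without mutation\<close>

context fixation_model
begin

definition absorption :: "'g set \<Rightarrow> 'g set \<Rightarrow> real" where
  "absorption x z = lim (\<lambda>t. transn p 0 \<nu> t x z)"

lemma transn_nonneg_0: "0 \<le> transn p 0 \<nu> t x y"
  by (rule transn_nonneg[OF rule _ nu_range]) simp

lemma absorption_LIMSEQ: "z \<in> {{}, UNIV} \<Longrightarrow> (\<lambda>t. transn p 0 \<nu> t x z) \<longlonglongrightarrow> absorption x z"
  and transn_le_absorption: "z \<in> {{}, UNIV} \<Longrightarrow> transn p 0 \<nu> t x z \<le> absorption x z"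
proof -
  assume z: "z \<in> {{}, UNIV}"
  have "incseq (\<lambda>t. transn p 0 \<nu> t x z)"
  proof (rule incseq_SucI)
    fix t
    have "transn p 0 \<nu> t x z = transn p 0 \<nu> t x z * trans p 0 \<nu> z z"
      by (simp add: trans_no_mutation_monomorphic[OF rule z])
    also have "\<dots> \<le> transn p 0 \<nu> (Suc t) x z"
      unfolding transn.simps
      by (rule member_le_sum[where f="\<lambda>y. transn p 0 \<nu> t x y * trans p 0 \<nu> y z"])
         (auto intro!: mult_nonneg_nonneg transn_nonneg_0 trans_nonneg[OF rule _ nu_range])
    finally show "transn p 0 \<nu> t x z \<le> transn p 0 \<nu> (Suc t) x z" .
  qed
  then obtain L where L: "(\<lambda>t. transn p 0 \<nu> t x z) \<longlonglongrightarrow> L" "\<And>t. transn p 0 \<nu> t x z \<le> L"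
    using incseq_convergent[of _ 1] transn_le_1[OF rule _ nu_range] by (metis atLeastAtMost_iff order_refl zero_le_one)
  then show "(\<lambda>t. transn p 0 \<nu> t x z) \<longlonglongrightarrow> absorption x z" "transn p 0 \<nu> t x z \<le> absorption x z"
    unfolding absorption_def by (simp_all add: limI)
qed

lemma absorption_nonneg: "z \<in> {{}, UNIV} \<Longrightarrow> 0 \<le> absorption x z"
  using transn_le_absorption[of z 0 x] transn_nonneg_0[of 0 x z] by linarith

lemma absorption_monomorphic:
  assumes "x \<in> {{}, UNIV}"
  shows "absorption x z = (if z = x then 1 else 0)"
  unfolding absorption_def transn_no_mutation_monomorphic[OF rule assms] by (simp add: limI)

lemma absorption_harmonic:
  assumes "z \<in> {{}, UNIV}"
  shows "(\<Sum>y\<in>UNIV. trans p 0 \<nu> x y * absorption y z) = absorption x z"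
proof -
  have "(\<lambda>t. transn p 0 \<nu> (Suc t) x z) \<longlonglongrightarrow> (\<Sum>y\<in>UNIV. trans p 0 \<nu> x y * absorption y z)"
    unfolding transn_Suc_left by (intro tendsto_sum tendsto_mult tendsto_const absorption_LIMSEQ assms)
  then show ?thesis
    using LIMSEQ_unique LIMSEQ_Suc[OF absorption_LIMSEQ[OF assms]] by blast
qed

lemma sum_polymorphic_transn_decay:
  "(\<Sum>y\<in>polymorphic. transn p 0 \<nu> (k * length es) x y) \<le> (1 - fix_bound) ^ k"
proof (induction k)
  case 0
  show ?case
    using sum_mono2[of UNIV polymorphic "transn p 0 \<nu> 0 x"] transn_nonneg_0 sum_transn[OF rule]
    by simp
next
  case (Suc k)
  let ?q = "\<lambda>z. (\<Sum>y\<in>polymorphic. transn p 0 \<nu> (length es) z y)"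
  have "(\<Sum>y\<in>polymorphic. transn p 0 \<nu> (Suc k * length es) x y)
      = (\<Sum>z\<in>UNIV. transn p 0 \<nu> (k * length es) x z * ?q z)"
    by (simp only: mult_Suc add.commute[of "length es"] transn_add sum_distrib_left) (rule sum.swap)
  also have "\<dots> = (\<Sum>z\<in>polymorphic. transn p 0 \<nu> (k * length es) x z * ?q z)"
    unfolding sum_UNIV_split_polymorphic
    by (simp add: transn_no_mutation_monomorphic[OF rule] polymorphic_def)
  also have "\<dots> \<le> (\<Sum>z\<in>polymorphic. transn p 0 \<nu> (k * length es) x z * (1 - fix_bound))"
    by (intro sum_mono mult_left_mono sum_polymorphic_transn_le transn_nonneg_0)
  also have "\<dots> = (1 - fix_bound) * (\<Sum>z\<in>polymorphic. transn p 0 \<nu> (k * length es) x z)"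
    by (simp add: sum_distrib_left mult.commute)
  also have "\<dots> \<le> (1 - fix_bound) * (1 - fix_bound) ^ k"
    using Suc fix_bound_le_1 by (intro mult_left_mono) auto
  finally show ?case
    by simp
qed

text \<open>Absorption is certain: the polymorphic mass decays geometrically along multiples of
  \<open>length es\<close>.\<close>

lemma absorption_empty_UNIV: "absorption x {} + absorption x UNIV = 1"
proof -
  let ?f = "\<lambda>t. transn p 0 \<nu> t x {} + transn p 0 \<nu> t x UNIV"
  have f_eq: "?f t = 1 - (\<Sum>y\<in>polymorphic. transn p 0 \<nu> t x y)" for t
    using sum_transn[OF rule, of 0 \<nu> t x] sum_UNIV_split_polymorphic[of "transn p 0 \<nu> t x"] by simp
  have "strict_mono (\<lambda>k. k * length es)"
    using es_nonempty by (auto simp: strict_mono_def)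
  then have "(\<lambda>k. ?f (k * length es)) \<longlonglongrightarrow> absorption x {} + absorption x UNIV"
    using LIMSEQ_subseq_LIMSEQ[OF tendsto_add[OF absorption_LIMSEQ absorption_LIMSEQ]]
    by (simp add: o_def)
  moreover have "(\<lambda>k. ?f (k * length es)) \<longlonglongrightarrow> 1"
  proof (rule real_tendsto_sandwich)
    show "\<forall>\<^sub>F k in sequentially. 1 - (1 - fix_bound) ^ k \<le> ?f (k * length es)"
      using sum_polymorphic_transn_decay f_eq by simp
    show "\<forall>\<^sub>F k in sequentially. ?f (k * length es) \<le> 1"
      by (simp add: f_eq sum_nonneg transn_nonneg_0)
    have "(\<lambda>k. (1 - fix_bound) ^ k) \<longlonglongrightarrow> 0"
      using fix_bound_pos fix_bound_le_1 by (intro LIMSEQ_power_zero) auto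
    then show "(\<lambda>k. 1 - (1 - fix_bound) ^ k) \<longlonglongrightarrow> 1"
      using tendsto_diff[OF tendsto_const, of _ 0 sequentially 1] by simp
  qed simp
  ultimately show ?thesis
    using LIMSEQ_unique by blast
qed

lemma absorption_fold_replace_ge: "fix_bound \<le> absorption x (fold replace es x)"
proof -
  have "fold replace es x \<in> {{}, UNIV}"
    by (simp add: fold_replace_es)
  then show ?thesis
    using transn_fold_replace_ge[of x] transn_le_absorption[of "fold replace es x" "length es" x]
    by linarith
qed

lemma rho_A_eq: "rho_A p \<nu> = (\<Sum>g\<in>UNIV. dd p g {} * absorption {g} UNIV) / btot p {}"
  unfolding rho_A_def absorption_def by (simp add: sum_divide_distrib)

lemma rho_a_eq: "rho_a p \<nu> = (\<Sum>g\<in>UNIV. dd p g UNIV * absorption (UNIV - {g}) {}) / btot p UNIV"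
  unfolding rho_a_def absorption_def by (simp add: sum_divide_distrib)

lemma rho_A_pos: "0 < rho_A p \<nu>"
proof -
  have "0 < dd p g0 {} * absorption {g0} UNIV"
    using absorption_fold_replace_ge[of "{g0}"] fix_bound_pos dd_g0_pos
    by (simp add: fold_replace_es)
  also have "\<dots> \<le> (\<Sum>g\<in>UNIV. dd p g {} * absorption {g} UNIV)"
    by (rule member_le_sum) (auto intro!: mult_nonneg_nonneg dd_nonneg[OF rule] absorption_nonneg)
  finally show ?thesis
    unfolding rho_A_eq using btot_pos by simp
qed

lemma rho_a_pos: "0 < rho_a p \<nu>"
proof -
  have "0 < dd p g0 UNIV * absorption (UNIV - {g0}) {}"
    using absorption_fold_replace_ge[of "UNIV - {g0}"] fix_bound_pos dd_g0_pos
    by (simp add: fold_replace_es)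
  also have "\<dots> \<le> (\<Sum>g\<in>UNIV. dd p g UNIV * absorption (UNIV - {g}) {})"
    by (rule member_le_sum) (auto intro!: mult_nonneg_nonneg dd_nonneg[OF rule] absorption_nonneg)
  finally show ?thesis
    unfolding rho_a_eq using btot_pos by simp
qed

end

subsection \<open>The stationary distribution for rare mutation\<close>

context fixation_model
begin

abbreviation mss :: "real \<Rightarrow> 'g set \<Rightarrow> real" where
  "mss u \<equiv> pi_MSS p u \<nu>"

definition polymorphic_mass :: "real \<Rightarrow> real" where
  "polymorphic_mass u = (\<Sum>x\<in>polymorphic. mss u x)"

lemma
  assumes "u \<in> {0<..1}"
  shows mss_nonneg: "0 \<le> mss u x"
    and sum_mss: "(\<Sum>x\<in>UNIV. mss u x) = 1"
    and mss_trans: "(\<Sum>x\<in>UNIV. mss u x * trans p u \<nu> x y) = mss u y"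
    and mss_transn: "(\<Sum>x\<in>UNIV. mss u x * transn p u \<nu> t x y) = mss u y"
  using stationary_pi_MSS[OF assms] stationary_transn[OF stationary_pi_MSS[OF assms]]
  unfolding stationary_def by auto

lemma mss_le_1: "u \<in> {0<..1} \<Longrightarrow> mss u x \<le> 1"
  using member_le_sum[of x UNIV "mss u"] mss_nonneg sum_mss by fastforce

lemma mss_le_polymorphic_mass: "u \<in> {0<..1} \<Longrightarrow> x \<in> polymorphic \<Longrightarrow> mss u x \<le> polymorphic_mass u"
  unfolding polymorphic_mass_def by (rule member_le_sum) (auto intro: mss_nonneg)

lemma polymorphic_mass_nonneg: "u \<in> {0<..1} \<Longrightarrow> 0 \<le> polymorphic_mass u"
  unfolding polymorphic_mass_def by (intro sum_nonneg mss_nonneg)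

lemma mss_empty_UNIV: "u \<in> {0<..1} \<Longrightarrow> mss u {} + mss u UNIV = 1 - polymorphic_mass u"
  using sum_mss sum_UNIV_split_polymorphic[of "mss u"] by (simp add: polymorphic_mass_def)

definition polymorphic_return :: "real \<Rightarrow> 'g set \<Rightarrow> real" where
  "polymorphic_return u x = (\<Sum>y\<in>polymorphic. transn p u \<nu> (length es) x y)"

lemma polymorphic_return_nonneg: "u \<in> {0..1} \<Longrightarrow> 0 \<le> polymorphic_return u x"
  unfolding polymorphic_return_def by (intro sum_nonneg transn_nonneg[OF rule _ nu_range])

lemma polymorphic_mass_eq_sum_return:
  assumes "u \<in> {0<..1}"
  shows "polymorphic_mass u = mss u {} * polymorphic_return u {} + mss u UNIV * polymorphic_return u UNIV
    + (\<Sum>x\<in>polymorphic. mss u x * polymorphic_return u x)"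
proof -
  have "polymorphic_mass u = (\<Sum>y\<in>polymorphic. \<Sum>x\<in>UNIV. mss u x * transn p u \<nu> (length es) x y)"
    by (simp add: polymorphic_mass_def mss_transn[OF assms])
  also have "\<dots> = (\<Sum>x\<in>UNIV. \<Sum>y\<in>polymorphic. mss u x * transn p u \<nu> (length es) x y)"
    by (rule sum.swap)
  also have "\<dots> = (\<Sum>x\<in>UNIV. mss u x * polymorphic_return u x)"
    by (simp add: polymorphic_return_def sum_distrib_left)
  finally show ?thesis
    unfolding sum_UNIV_split_polymorphic .
qed

lemma tendsto_polymorphic_return_quotient:
  assumes "z \<in> {{}, UNIV}"
  shows "((\<lambda>u. polymorphic_return u z / u)
    \<longlongrightarrow> (\<Sum>y\<in>polymorphic. deriv (\<lambda>u. transn p u \<nu> (length es) z y) 0)) (at_right 0)"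
  unfolding polymorphic_return_def sum_divide_distrib
  using assms by (intro tendsto_sum tendsto_transn_quotient[OF rule assms]) (auto simp: polymorphic_def)

lemma eventually_polymorphic_return_less:
  "eventually (\<lambda>u. \<forall>x\<in>polymorphic. polymorphic_return u x < 1 - fix_bound / 2) (at_right 0)"
proof (rule eventually_ball_finite)
  show "\<forall>x\<in>polymorphic. eventually (\<lambda>u. polymorphic_return u x < 1 - fix_bound / 2) (at_right 0)"
  proof
    fix x :: "'g set"
    have "polymorphic_return 0 x < 1 - fix_bound / 2"
      using sum_polymorphic_transn_le[of x] fix_bound_pos by (simp add: polymorphic_return_def)
    then show "eventually (\<lambda>u. polymorphic_return u x < 1 - fix_bound / 2) (at_right 0)"
      unfolding polymorphic_return_def by (intro order_tendstoD(2)[OF tendsto_sum[OF tendsto_transn]])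
  qed
qed simp

text \<open>From \<open>a\<close> and \<open>A\<close> the chain becomes polymorphic only at rate \<open>O(u)\<close>, while polymorphic
  states stay polymorphic with probability at most \<open>1 - fix_bound / 2\<close>.\<close>

lemma polymorphic_mass_bound: "\<exists>C. eventually (\<lambda>u. polymorphic_mass u \<le> C * u) (at_right 0)"
proof -
  obtain c1 where c1: "((\<lambda>u. polymorphic_return u {} / u) \<longlongrightarrow> c1) (at_right 0)"
    using tendsto_polymorphic_return_quotient[of "{}"] by blast
  obtain c2 where c2: "((\<lambda>u. polymorphic_return u UNIV / u) \<longlongrightarrow> c2) (at_right 0)"
    using tendsto_polymorphic_return_quotient[of UNIV] by blast
  have "eventually (\<lambda>u. polymorphic_mass u \<le> 2 * (\<bar>c1\<bar> + \<bar>c2\<bar> + 2) / fix_bound * u) (at_right 0)"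
    using order_tendstoD(2)[OF c1 less_add_one[of "\<bar>c1\<bar>", THEN order.strict_trans1[OF abs_ge_self]]]
      order_tendstoD(2)[OF c2 less_add_one[of "\<bar>c2\<bar>", THEN order.strict_trans1[OF abs_ge_self]]]
      eventually_polymorphic_return_less eventually_at_right_0_1
  proof eventually_elim
    case (elim u)
    then have u: "u \<in> {0<..1}" "u \<in> {0..1}"
      by auto
    have bound: "mss u z * polymorphic_return u z \<le> 1 * ((\<bar>c\<bar> + 1) * u)"
      if "polymorphic_return u z / u < \<bar>c\<bar> + 1" for z c
      using that mss_le_1[OF u(1)] polymorphic_return_nonneg[OF u(2)] u
      by (intro mult_mono) (auto simp: divide_less_eq)
    have "(\<Sum>x\<in>polymorphic. mss u x * polymorphic_return u x)
        \<le> (\<Sum>x\<in>polymorphic. mss u x * (1 - fix_bound / 2))"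
      using elim(3) by (intro sum_mono mult_left_mono mss_nonneg[OF u(1)]) auto
    also have "\<dots> = (1 - fix_bound / 2) * polymorphic_mass u"
      by (simp add: polymorphic_mass_def sum_distrib_right mult.commute)
    finally have "fix_bound / 2 * polymorphic_mass u \<le> (\<bar>c1\<bar> + 1) * u + (\<bar>c2\<bar> + 1) * u"
      using polymorphic_mass_eq_sum_return[OF u(1)] bound[OF elim(1)] bound[OF elim(2)]
      by (simp add: algebra_simps)
    then show ?case
      using fix_bound_pos by (simp add: field_simps)
  qed
  then show ?thesis
    by blast
qed

lemma tendsto_polymorphic_mass: "(polymorphic_mass \<longlongrightarrow> 0) (at_right 0)"
proof -
  obtain C where C: "eventually (\<lambda>u. polymorphic_mass u \<le> C * u) (at_right 0)"
    using polymorphic_mass_bound by blast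
  show ?thesis
  proof (rule real_tendsto_sandwich[where f="\<lambda>_. 0" and h="\<lambda>u. C * u"])
    show "eventually (\<lambda>u. 0 \<le> polymorphic_mass u) (at_right 0)"
      using eventually_at_right_0_1 by eventually_elim (rule polymorphic_mass_nonneg)
    have "((\<lambda>u. C * u) \<longlongrightarrow> C * 0) (at_right 0)"
      by (intro tendsto_intros)
    then show "((\<lambda>u. C * u) \<longlongrightarrow> 0) (at_right 0)"
      by simp
  qed (use C in simp_all)
qed

lemma tendsto_mss_polymorphic:
  assumes "x \<in> polymorphic"
  shows "((\<lambda>u. mss u x) \<longlongrightarrow> 0) (at_right 0)"
proof (rule real_tendsto_sandwich[where f="\<lambda>_. 0" and h="polymorphic_mass"])
  show "eventually (\<lambda>u. 0 \<le> mss u x) (at_right 0)"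
    using eventually_at_right_0_1 by eventually_elim (rule mss_nonneg)
  show "eventually (\<lambda>u. mss u x \<le> polymorphic_mass u) (at_right 0)"
    using eventually_at_right_0_1 by eventually_elim (rule mss_le_polymorphic_mass[OF _ assms])
qed (simp_all add: tendsto_polymorphic_mass)

lemma mss_mutation_increment:
  assumes "u \<in> {0<..1}"
  shows "(\<Sum>x\<in>UNIV. mss u x * (\<Sum>y\<in>UNIV. (trans p u \<nu> x y - trans p 0 \<nu> x y) * h y))
    = (\<Sum>x\<in>UNIV. mss u x * (h x - (\<Sum>y\<in>UNIV. trans p 0 \<nu> x y * h y)))"
proof -
  have "(\<Sum>x\<in>UNIV. mss u x * (\<Sum>y\<in>UNIV. trans p u \<nu> x y * h y))
      = (\<Sum>y\<in>UNIV. (\<Sum>x\<in>UNIV. mss u x * trans p u \<nu> x y) * h y)"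
    by (simp add: sum_distrib_left sum_distrib_right mult.assoc) (rule sum.swap)
  also have "\<dots> = (\<Sum>y\<in>UNIV. mss u y * h y)"
    by (simp add: mss_trans[OF assms])
  finally show ?thesis
    by (simp add: left_diff_distrib right_diff_distrib sum_subtractf)
qed

lemma tendsto_mss_drift:
  "((\<lambda>u. (\<Sum>x\<in>UNIV. mss u x * (\<Sum>y\<in>UNIV. (trans p u \<nu> x y - trans p 0 \<nu> x y) * h y)) / u
      - (mss u {} * drift p \<nu> {} h + mss u UNIV * drift p \<nu> UNIV h)) \<longlongrightarrow> 0) (at_right 0)"
proof -
  define S where "S u x = (\<Sum>y\<in>UNIV. (trans p u \<nu> x y - trans p 0 \<nu> x y) * h y)" for u x
  define W where "W u x = S u x / u" for u x
  have mono: "((\<lambda>u. mss u z * (W u z - drift p \<nu> z h)) \<longlongrightarrow> 0) (at_right 0)" for z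
  proof (rule tendsto_bounded_mult_zero[where B=1])
    show "((\<lambda>u. W u z - drift p \<nu> z h) \<longlongrightarrow> 0) (at_right 0)"
      unfolding W_def S_def by (rule LIM_zero[OF tendsto_drift])
    show "eventually (\<lambda>u. \<bar>mss u z\<bar> \<le> 1) (at_right 0)"
      using eventually_at_right_0_1 by eventually_elim (simp add: mss_nonneg mss_le_1)
  qed
  have "((\<lambda>u. \<Sum>x\<in>polymorphic. mss u x * W u x) \<longlongrightarrow> (\<Sum>x\<in>polymorphic. 0 * drift p \<nu> x h)) (at_right 0)"
    unfolding W_def S_def by (intro tendsto_sum tendsto_mult tendsto_mss_polymorphic tendsto_drift)
  then have "((\<lambda>u. mss u {} * (W u {} - drift p \<nu> {} h) + mss u UNIV * (W u UNIV - drift p \<nu> UNIV h)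
      + (\<Sum>x\<in>polymorphic. mss u x * W u x)) \<longlongrightarrow> 0 + 0 + 0) (at_right 0)"
    by (intro tendsto_add mono) simp
  moreover have "(\<Sum>x\<in>UNIV. mss u x * S u x) / u - (mss u {} * drift p \<nu> {} h + mss u UNIV * drift p \<nu> UNIV h)
      = mss u {} * (W u {} - drift p \<nu> {} h) + mss u UNIV * (W u UNIV - drift p \<nu> UNIV h)
        + (\<Sum>x\<in>polymorphic. mss u x * W u x)" for u
  proof -
    have eq: "(\<Sum>x\<in>UNIV. mss u x * S u x) / u = (\<Sum>x\<in>UNIV. mss u x * W u x)"
      by (simp add: W_def sum_divide_distrib)
    show ?thesis
      unfolding eq sum_UNIV_split_polymorphic[of "\<lambda>x. mss u x * W u x"] by (simp add: algebra_simps)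
  qed
  ultimately show ?thesis
    unfolding S_def by simp
qed

definition fix_flux_A :: real where
  "fix_flux_A = \<nu> * btot p {} * rho_A p \<nu>"

definition fix_flux_a :: real where
  "fix_flux_a = (1 - \<nu>) * btot p UNIV * rho_a p \<nu>"

lemma fix_flux_A_pos: "0 < fix_flux_A"
  unfolding fix_flux_A_def using nu_pos btot_pos rho_A_pos by simp

lemma fix_flux_a_pos: "0 < fix_flux_a"
  unfolding fix_flux_a_def using nu_less_1 btot_pos rho_a_pos by simp

lemma drift_absorption_empty: "drift p \<nu> {} (\<lambda>y. absorption y UNIV) = fix_flux_A"
  unfolding drift_empty[OF rule] fix_flux_A_def rho_A_eq
  using btot_pos[of "{}"] by (simp add: absorption_monomorphic)

lemma drift_absorption_UNIV: "drift p \<nu> UNIV (\<lambda>y. absorption y UNIV) = - fix_flux_a"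
proof -
  have "absorption (UNIV - {g}) UNIV - absorption UNIV UNIV = - absorption (UNIV - {g}) {}" for g
    using absorption_empty_UNIV[of "UNIV - {g}"] by (simp add: absorption_monomorphic)
  then show ?thesis
    unfolding drift_UNIV[OF rule] fix_flux_a_def rho_a_eq
    using btot_pos[of UNIV] by (simp add: sum_negf)
qed

definition pi_a0 :: real where
  "pi_a0 = fix_flux_a / (fix_flux_A + fix_flux_a)"

definition pi_A0 :: real where
  "pi_A0 = fix_flux_A / (fix_flux_A + fix_flux_a)"

text \<open>With \<open>h\<close> the absorption probability in \<open>A\<close>, which is harmonic for the kernel
  without mutation, the mutational flux out of \<open>a\<close> into eventual fixation of \<open>A\<close> balances the
  flux out of \<open>A\<close> into eventual fixation of \<open>a\<close>.\<close>

lemma tendsto_mss_flux_balance: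
  "((\<lambda>u. mss u {} * fix_flux_A - mss u UNIV * fix_flux_a) \<longlongrightarrow> 0) (at_right 0)"
proof -
  let ?h = "\<lambda>y. absorption y UNIV"
  let ?S = "\<lambda>u. \<Sum>x\<in>UNIV. mss u x * (\<Sum>y\<in>UNIV. (trans p u \<nu> x y - trans p 0 \<nu> x y) * ?h y)"
  have "((\<lambda>u. - (?S u / u - (mss u {} * fix_flux_A + mss u UNIV * - fix_flux_a))) \<longlongrightarrow> 0) (at_right 0)"
    using tendsto_minus[OF tendsto_mss_drift[of ?h]]
    unfolding drift_absorption_empty drift_absorption_UNIV minus_zero .
  moreover have "eventually (\<lambda>u. ?S u = 0) (at_right 0)"
    using eventually_at_right_0_1
    by eventually_elim (simp add: mss_mutation_increment absorption_harmonic)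
  then have "eventually (\<lambda>u. - (?S u / u - (mss u {} * fix_flux_A + mss u UNIV * - fix_flux_a))
      = mss u {} * fix_flux_A - mss u UNIV * fix_flux_a) (at_right 0)"
    by eventually_elim simp
  ultimately show ?thesis
    by (rule Lim_transform_eventually)
qed

lemma tendsto_mss_empty: "((\<lambda>u. mss u {}) \<longlongrightarrow> pi_a0) (at_right 0)"
  and tendsto_mss_UNIV: "((\<lambda>u. mss u UNIV) \<longlongrightarrow> pi_A0) (at_right 0)"
proof -
  have mass: "eventually (\<lambda>u. mss u UNIV = 1 - polymorphic_mass u - mss u {}) (at_right 0)"
    using eventually_at_right_0_1 by eventually_elim (drule mss_empty_UNIV, linarith)
  have "((\<lambda>u. (mss u {} * fix_flux_A - mss u UNIV * fix_flux_a + fix_flux_a * (1 - polymorphic_mass u))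
      / (fix_flux_A + fix_flux_a)) \<longlongrightarrow> (0 + fix_flux_a * (1 - 0)) / (fix_flux_A + fix_flux_a)) (at_right 0)"
    using fix_flux_A_pos fix_flux_a_pos
    by (intro tendsto_intros tendsto_mss_flux_balance tendsto_polymorphic_mass) simp
  moreover have "eventually (\<lambda>u. (mss u {} * fix_flux_A - mss u UNIV * fix_flux_a
      + fix_flux_a * (1 - polymorphic_mass u)) / (fix_flux_A + fix_flux_a) = mss u {}) (at_right 0)"
    using mass
  proof eventually_elim
    case (elim u)
    show ?case
      unfolding elim using fix_flux_A_pos fix_flux_a_pos by (simp add: field_simps)
  qed
  ultimately show empty: "((\<lambda>u. mss u {}) \<longlongrightarrow> pi_a0) (at_right 0)"
    unfolding pi_a0_def by (simp add: Lim_transform_eventually)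
  have "((\<lambda>u. 1 - polymorphic_mass u - mss u {}) \<longlongrightarrow> 1 - 0 - pi_a0) (at_right 0)"
    by (intro tendsto_intros tendsto_polymorphic_mass empty)
  moreover have "1 - 0 - pi_a0 = pi_A0"
    unfolding pi_a0_def pi_A0_def using fix_flux_A_pos fix_flux_a_pos by (simp add: field_simps)
  ultimately have "((\<lambda>u. 1 - polymorphic_mass u - mss u {}) \<longlongrightarrow> pi_A0) (at_right 0)"
    by simp
  then show "((\<lambda>u. mss u UNIV) \<longlongrightarrow> pi_A0) (at_right 0)"
    by (rule Lim_transform_eventually) (use mass in \<open>eventually_elim, simp\<close>)
qed

end

lemma card_eq_sum_indicator: "real (card (A :: ('g::finite) set)) = (\<Sum>h\<in>UNIV. if h \<in> A then 1 else 0)"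
  by (simp add: sum.If_cases Int_def)

lemma card_replace_diff:
  assumes "e \<in> events"
  shows "real (card (replace e x)) - real (card x)
    = (\<Sum>h\<in>UNIV. (if h \<in> fst e \<and> snd e h \<in> x then 1 else 0) - (if h \<in> fst e \<and> h \<in> x then 1 else 0))"
  unfolding card_eq_sum_indicator sum_subtractf[symmetric]
  using assms by (intro sum.cong) (auto simp: replace_def events_def)

lemma Delta_sel_eq:
  assumes "replacement_rule p"
  shows "Delta_sel p x = (\<Sum>y\<in>UNIV. trans p 0 \<nu> x y * real (card y)) - real (card x)"
proof -
  have "(\<Sum>y\<in>UNIV. trans p 0 \<nu> x y * real (card y)) = (\<Sum>e\<in>events. p x e * real (card (replace e x)))"
    unfolding trans_no_mutation sum_distrib_right mult.assoc
    by (subst sum.swap) (simp only: sum_distrib_left[symmetric] sum_mult_delta)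
  also have "\<dots> - real (card x) = (\<Sum>e\<in>events. p x e * (real (card (replace e x)) - real (card x)))"
    using replacement_ruleD(2)[OF assms, of x]
    by (simp add: right_diff_distrib sum_subtractf sum_distrib_right[symmetric])
  also have "\<dots> = (\<Sum>e\<in>events. \<Sum>h\<in>UNIV. (if h \<in> fst e \<and> snd e h \<in> x then p x e else 0)
      - (if h \<in> fst e \<and> h \<in> x then p x e else 0))"
    by (simp add: card_replace_diff sum_distrib_left right_diff_distrib sum_subtractf
        if_distrib[of "\<lambda>c. p x _ * c"] cong: if_cong)
  also have "\<dots> = Delta_sel p x"
    unfolding Delta_sel_def sum_subtractf sum_bb_eq sum_dd_eq
    by (simp only: sum.swap[where A=UNIV and B=events])
  finally show ?thesis
    by simp
qed

lemma Delta_sel_monomorphic: "x \<in> {{}, UNIV} \<Longrightarrow> Delta_sel p x = 0"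
  using btot_eq_sum_dd[of p UNIV]
  by (auto simp: Delta_sel_def sum_subtractf btot_def)

lemma drift_card_empty: "replacement_rule p \<Longrightarrow> drift p \<nu> {} (\<lambda>y. real (card y)) = \<nu> * btot p {}"
  by (simp add: drift_empty btot_eq_sum_dd)

lemma drift_card_UNIV:
  "replacement_rule p \<Longrightarrow> drift p \<nu> UNIV (\<lambda>y. real (card y)) = - ((1 - \<nu>) * btot p UNIV)"
  by (simp add: drift_UNIV btot_eq_sum_dd card_Diff_singleton sum_negf
      Suc_leI finite_UNIV_card_ge_0)

context fixation_model
begin

lemma tendsto_E_MSS: "((\<lambda>u. E_MSS p u \<nu> f) \<longlongrightarrow> pi_a0 * f {} + pi_A0 * f UNIV) (at_right 0)"
proof -
  have "((\<lambda>u. mss u {} * f {} + mss u UNIV * f UNIV + (\<Sum>x\<in>polymorphic. mss u x * f x))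
      \<longlongrightarrow> pi_a0 * f {} + pi_A0 * f UNIV + (\<Sum>x\<in>polymorphic. 0 * f x)) (at_right 0)"
    by (intro tendsto_intros tendsto_mss_empty tendsto_mss_UNIV tendsto_mss_polymorphic) auto
  then show ?thesis
    unfolding E_MSS_def sum_UNIV_split_polymorphic[of "\<lambda>x. mss _ x * f x"] by simp
qed

lemma Lim_E_MSS_xbar: "Lim (at_right 0) (\<lambda>u. E_MSS p u \<nu> xbar) = pi_A0"
  using tendsto_E_MSS[of xbar] by (intro tendsto_Lim) (simp_all add: xbar_def)

lemma Lim_pi_MSS:
  "Lim (at_right 0) (\<lambda>u. pi_MSS p u \<nu> x) = (if x = {} then pi_a0 else if x = UNIV then pi_A0 else 0)"
  using tendsto_mss_empty tendsto_mss_UNIV tendsto_mss_polymorphic[of x]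
  by (intro tendsto_Lim) (auto simp: polymorphic_def)

definition selection_slope :: real where
  "selection_slope = pi_A0 * ((1 - \<nu>) * btot p UNIV) - pi_a0 * (\<nu> * btot p {})"

text \<open>With \<open>h\<close> the number of \<open>A\<close> alleles, the right-hand side of
  \<open>mss_mutation_increment\<close> is \<open>- E_MSS p u \<nu> (Delta_sel p)\<close>.\<close>

lemma tendsto_E_MSS_Delta_sel_quotient:
  "((\<lambda>u. E_MSS p u \<nu> (Delta_sel p) / u) \<longlongrightarrow> selection_slope) (at_right 0)"
proof -
  let ?h = "\<lambda>y. real (card y)"
  let ?S = "\<lambda>u. (\<Sum>x\<in>UNIV. mss u x * (\<Sum>y\<in>UNIV. (trans p u \<nu> x y - trans p 0 \<nu> x y) * ?h y))"
  have "((\<lambda>u. - ((?S u / u - (mss u {} * drift p \<nu> {} ?h + mss u UNIV * drift p \<nu> UNIV ?h))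
      + (mss u {} * drift p \<nu> {} ?h + mss u UNIV * drift p \<nu> UNIV ?h)))
      \<longlongrightarrow> - (0 + (pi_a0 * drift p \<nu> {} ?h + pi_A0 * drift p \<nu> UNIV ?h))) (at_right 0)"
    by (intro tendsto_intros tendsto_mss_drift tendsto_mss_empty tendsto_mss_UNIV)
  then have "((\<lambda>u. - (?S u / u)) \<longlongrightarrow> selection_slope) (at_right 0)"
    by (simp add: selection_slope_def drift_card_empty[OF rule] drift_card_UNIV[OF rule])
  moreover have "eventually (\<lambda>u. - (?S u / u) = E_MSS p u \<nu> (Delta_sel p) / u) (at_right 0)"
    using eventually_at_right_0_1
  proof eventually_elim
    case (elim u)
    have "E_MSS p u \<nu> (Delta_sel p)
        = (\<Sum>x\<in>UNIV. mss u x * ((\<Sum>y\<in>UNIV. trans p 0 \<nu> x y * ?h y) - ?h x))"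
      by (simp add: E_MSS_def Delta_sel_eq[OF rule, of _ \<nu>])
    also have "\<dots> = - ?S u"
      unfolding mss_mutation_increment[OF elim] by (simp add: sum_negf[symmetric] algebra_simps)
    finally show ?case
      by simp
  qed
  ultimately show ?thesis
    by (rule Lim_transform_eventually)
qed

lemma E_MSS_ext_Delta_sel_0: "E_MSS_ext p 0 \<nu> (Delta_sel p) = 0"
  unfolding E_MSS_ext_def pi_MSS_ext_def Lim_pi_MSS
  by (intro sum.neutral) (auto simp: Delta_sel_monomorphic)

lemma right_deriv0_E_MSS_Delta_sel:
  "right_deriv0 (\<lambda>u. E_MSS_ext p u \<nu> (Delta_sel p)) = selection_slope"
proof -
  let ?F = "\<lambda>u. E_MSS_ext p u \<nu> (Delta_sel p)"
  have "eventually (\<lambda>u. E_MSS p u \<nu> (Delta_sel p) / u = (?F u - ?F 0) / (u - 0)) (at_right 0)"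
    using eventually_at_right_0_1
    by eventually_elim (simp only: E_MSS_ext_Delta_sel_0, simp add: E_MSS_ext_def E_MSS_def pi_MSS_ext_def)
  then have quotient: "((\<lambda>u. (?F u - ?F 0) / (u - 0)) \<longlongrightarrow> selection_slope) (at_right 0)"
    by (rule Lim_transform_eventually[OF tendsto_E_MSS_Delta_sel_quotient])
  show ?thesis
    unfolding right_deriv0_def
  proof (rule the_equality)
    show "(?F has_real_derivative selection_slope) (at_right 0)"
      unfolding has_field_derivative_iff by (rule quotient)
    show "D = selection_slope" if "(?F has_real_derivative D) (at_right 0)" for D
      using that quotient unfolding has_field_derivative_iff
      by (auto intro: tendsto_unique[rotated])
  qed
qed

end

subsection \<open>The rare-mutation conditional distribution\<close>

context fixation_model
begin

definition mss_rate :: "real \<Rightarrow> 'g set \<Rightarrow> real" where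
  "mss_rate u y = mss u y / u"

definition mss_rate_residual :: "real \<Rightarrow> 'g set \<Rightarrow> real" where
  "mss_rate_residual u y =
     mss_rate u y - (\<Sum>x\<in>polymorphic. mss_rate u x * transn p 0 \<nu> (length es) x y)"

text \<open>On polymorphic states the kernel without mutation loses at least \<open>fix_bound\<close> of its
  mass in \<open>length es\<close> steps, so \<open>mss_rate\<close> is controlled by its residual.\<close>

lemma sum_mss_rate_diff_le:
  "(\<Sum>y\<in>polymorphic. \<bar>mss_rate u y - mss_rate v y\<bar>)
    \<le> (\<Sum>y\<in>polymorphic. \<bar>mss_rate_residual u y - mss_rate_residual v y\<bar>) / fix_bound"
proof -
  define w where "w y = mss_rate u y - mss_rate v y" for y
  define l where "l y = mss_rate_residual u y - mss_rate_residual v y" for y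
  have recursion: "w y = l y + (\<Sum>x\<in>polymorphic. w x * transn p 0 \<nu> (length es) x y)" for y
    unfolding w_def l_def mss_rate_residual_def by (simp add: left_diff_distrib sum_subtractf)
  have "\<bar>w y\<bar> \<le> \<bar>l y\<bar> + (\<Sum>x\<in>polymorphic. \<bar>w x\<bar> * transn p 0 \<nu> (length es) x y)" for y
  proof -
    have "\<bar>\<Sum>x\<in>polymorphic. w x * transn p 0 \<nu> (length es) x y\<bar>
        \<le> (\<Sum>x\<in>polymorphic. \<bar>w x\<bar> * transn p 0 \<nu> (length es) x y)"
      by (rule order.trans[OF sum_abs]) (simp add: abs_mult transn_nonneg_0)
    then show ?thesis
      using arg_cong[OF recursion[of y], of abs]
        abs_triangle_ineq[of "l y" "\<Sum>x\<in>polymorphic. w x * transn p 0 \<nu> (length es) x y"]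
      by linarith
  qed
  then have "(\<Sum>y\<in>polymorphic. \<bar>w y\<bar>)
      \<le> (\<Sum>y\<in>polymorphic. \<bar>l y\<bar> + (\<Sum>x\<in>polymorphic. \<bar>w x\<bar> * transn p 0 \<nu> (length es) x y))"
    by (rule sum_mono)
  also have "\<dots> = (\<Sum>y\<in>polymorphic. \<bar>l y\<bar>)
      + (\<Sum>x\<in>polymorphic. \<bar>w x\<bar> * (\<Sum>y\<in>polymorphic. transn p 0 \<nu> (length es) x y))"
    unfolding sum.distrib sum_distrib_left by (subst sum.swap) (rule refl)
  also have "\<dots> \<le> (\<Sum>y\<in>polymorphic. \<bar>l y\<bar>) + (\<Sum>x\<in>polymorphic. \<bar>w x\<bar> * (1 - fix_bound))"
    by (intro add_left_mono sum_mono mult_left_mono sum_polymorphic_transn_le) simp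
  also have "\<dots> = (\<Sum>y\<in>polymorphic. \<bar>l y\<bar>) + (1 - fix_bound) * (\<Sum>x\<in>polymorphic. \<bar>w x\<bar>)"
    by (simp add: sum_distrib_left mult.commute)
  finally have "fix_bound * (\<Sum>y\<in>polymorphic. \<bar>w y\<bar>) \<le> (\<Sum>y\<in>polymorphic. \<bar>l y\<bar>)"
    by (simp add: algebra_simps)
  then show ?thesis
    unfolding w_def l_def using fix_bound_pos by (simp add: field_simps)
qed

lemma mss_rate_residual_eq:
  assumes u: "u \<in> {0<..1}"
  shows "mss_rate_residual u y = mss u {} * (transn p u \<nu> (length es) {} y / u)
    + mss u UNIV * (transn p u \<nu> (length es) UNIV y / u)
    + (\<Sum>x\<in>polymorphic. mss_rate u x * (transn p u \<nu> (length es) x y - transn p 0 \<nu> (length es) x y))"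
proof -
  have "mss u y = (\<Sum>x\<in>UNIV. mss u x * transn p u \<nu> (length es) x y)"
    by (rule mss_transn[OF u, symmetric])
  also have "\<dots> = mss u {} * transn p u \<nu> (length es) {} y + mss u UNIV * transn p u \<nu> (length es) UNIV y
      + (\<Sum>x\<in>polymorphic. mss u x * transn p u \<nu> (length es) x y)"
    by (rule sum_UNIV_split_polymorphic)
  finally have "mss_rate u y = mss u {} * (transn p u \<nu> (length es) {} y / u)
      + mss u UNIV * (transn p u \<nu> (length es) UNIV y / u)
      + (\<Sum>x\<in>polymorphic. mss_rate u x * transn p u \<nu> (length es) x y)"
    by (simp add: mss_rate_def add_divide_distrib sum_divide_distrib)
  then show ?thesis
    by (simp add: mss_rate_residual_def right_diff_distrib sum_subtractf)
qed

lemma eventually_mss_rate_bounded: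
  "\<exists>C. \<forall>x\<in>polymorphic. eventually (\<lambda>u. \<bar>mss_rate u x\<bar> \<le> C) (at_right 0)"
proof -
  obtain C where C: "eventually (\<lambda>u. polymorphic_mass u \<le> C * u) (at_right 0)"
    using polymorphic_mass_bound by blast
  have "eventually (\<lambda>u. \<bar>mss_rate u x\<bar> \<le> C) (at_right 0)" if x: "x \<in> polymorphic" for x
    using C eventually_at_right_0_1
  proof eventually_elim
    case (elim u)
    then have "mss u x \<le> C * u"
      using mss_le_polymorphic_mass[OF elim(2) x] by linarith
    then show ?case
      using mss_nonneg[OF elim(2)] elim(2) by (simp add: mss_rate_def divide_le_eq)
  qed
  then show ?thesis
    by blast
qed

lemma tendsto_mss_rate_residual:
  assumes y: "y \<in> polymorphic"
  shows "\<exists>l. ((\<lambda>u. mss_rate_residual u y) \<longlongrightarrow> l) (at_right 0)"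
proof -
  have quotient: "((\<lambda>u. transn p u \<nu> (length es) z y / u) \<longlongrightarrow> deriv (\<lambda>u. transn p u \<nu> (length es) z y) 0)
      (at_right 0)" if "z \<in> {{}, UNIV}" for z
    using that y by (intro tendsto_transn_quotient[OF rule]) (auto simp: polymorphic_def)
  obtain C where bounded: "\<And>x. x \<in> polymorphic \<Longrightarrow> eventually (\<lambda>u. \<bar>mss_rate u x\<bar> \<le> C) (at_right 0)"
    using eventually_mss_rate_bounded by blast
  have "((\<lambda>u. \<Sum>x\<in>polymorphic. mss_rate u x * (transn p u \<nu> (length es) x y - transn p 0 \<nu> (length es) x y))
      \<longlongrightarrow> 0) (at_right 0)"
    by (intro tendsto_null_sum tendsto_bounded_mult_zero[OF LIM_zero[OF tendsto_transn] bounded])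
  then have "((\<lambda>u. mss u {} * (transn p u \<nu> (length es) {} y / u) + mss u UNIV * (transn p u \<nu> (length es) UNIV y / u)
      + (\<Sum>x\<in>polymorphic. mss_rate u x * (transn p u \<nu> (length es) x y - transn p 0 \<nu> (length es) x y)))
      \<longlongrightarrow> pi_a0 * deriv (\<lambda>u. transn p u \<nu> (length es) {} y) 0
        + pi_A0 * deriv (\<lambda>u. transn p u \<nu> (length es) UNIV y) 0 + 0) (at_right 0)"
    by (intro tendsto_add tendsto_mult tendsto_mss_empty tendsto_mss_UNIV quotient) auto
  moreover have "eventually (\<lambda>u. mss u {} * (transn p u \<nu> (length es) {} y / u)
      + mss u UNIV * (transn p u \<nu> (length es) UNIV y / u)
      + (\<Sum>x\<in>polymorphic. mss_rate u x * (transn p u \<nu> (length es) x y - transn p 0 \<nu> (length es) x y))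
      = mss_rate_residual u y) (at_right 0)"
    using eventually_at_right_0_1 by eventually_elim (simp add: mss_rate_residual_eq)
  ultimately show ?thesis
    by (blast intro: Lim_transform_eventually)
qed

lemma mss_rate_diff_le:
  assumes "y \<in> polymorphic"
  shows "\<bar>mss_rate u y - mss_rate v y\<bar>
    \<le> ((\<Sum>z\<in>polymorphic. \<bar>mss_rate_residual u z - L z\<bar>)
        + (\<Sum>z\<in>polymorphic. \<bar>mss_rate_residual v z - L z\<bar>)) / fix_bound"
proof -
  have "\<bar>mss_rate u y - mss_rate v y\<bar> \<le> (\<Sum>y\<in>polymorphic. \<bar>mss_rate u y - mss_rate v y\<bar>)"
    by (rule member_le_sum) (use assms in auto)
  also have "\<dots> \<le> (\<Sum>y\<in>polymorphic. \<bar>mss_rate_residual u y - mss_rate_residual v y\<bar>) / fix_bound"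
    by (rule sum_mss_rate_diff_le)
  also have "\<dots> \<le> ((\<Sum>z\<in>polymorphic. \<bar>mss_rate_residual u z - L z\<bar>)
      + (\<Sum>z\<in>polymorphic. \<bar>mss_rate_residual v z - L z\<bar>)) / fix_bound"
    unfolding sum.distrib[symmetric] using fix_bound_pos
    by (intro divide_right_mono sum_mono) auto
  finally show ?thesis .
qed

definition rate_limit :: "'g set \<Rightarrow> real" where
  "rate_limit y = Lim (at_right 0) (\<lambda>u. mss_rate u y)"

lemma tendsto_mss_rate:
  assumes y: "y \<in> polymorphic"
  shows "((\<lambda>u. mss_rate u y) \<longlongrightarrow> rate_limit y) (at_right 0)"
proof -
  define L where "L z = Lim (at_right 0) (\<lambda>u. mss_rate_residual u z)" for z
  have L: "((\<lambda>u. mss_rate_residual u z) \<longlongrightarrow> L z) (at_right 0)" if "z \<in> polymorphic" for z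
    unfolding L_def by (intro tendsto_Lim_of_ex tendsto_mss_rate_residual that) simp
  define E where "E u = (\<Sum>z\<in>polymorphic. \<bar>mss_rate_residual u z - L z\<bar>)" for u
  have "(E \<longlongrightarrow> (\<Sum>z\<in>polymorphic. \<bar>L z - L z\<bar>)) (at_right 0)"
    unfolding E_def by (intro tendsto_intros L)
  then have E: "(E \<longlongrightarrow> 0) (at_right 0)"
    by simp
  have "\<exists>l. ((\<lambda>u. mss_rate u y) \<longlongrightarrow> l) (at_right 0)"
  proof (rule tendsto_of_cauchy)
    fix e :: real
    assume "0 < e"
    show "\<exists>P. eventually P (at_right 0) \<and>
        (\<forall>u v. P u \<and> P v \<longrightarrow> dist (mss_rate u y) (mss_rate v y) < e)"
    proof (intro exI conjI allI impI)
      show "eventually (\<lambda>u. E u < e * fix_bound / 2) (at_right 0)"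
        using \<open>0 < e\<close> fix_bound_pos by (intro order_tendstoD(2)[OF E]) simp
      fix u v
      assume "E u < e * fix_bound / 2 \<and> E v < e * fix_bound / 2"
      then have "(E u + E v) / fix_bound < e"
        using fix_bound_pos by (simp add: field_simps)
      then show "dist (mss_rate u y) (mss_rate v y) < e"
        using mss_rate_diff_le[OF y, of u v L] by (simp add: dist_real_def E_def)
    qed
  qed simp
  then show ?thesis
    unfolding rate_limit_def by (intro tendsto_Lim_of_ex) simp_all
qed

definition total_rate_limit :: real where
  "total_rate_limit = (\<Sum>y\<in>polymorphic. rate_limit y)"

lemma tendsto_polymorphic_mass_quotient:
  "((\<lambda>u. polymorphic_mass u / u) \<longlongrightarrow> total_rate_limit) (at_right 0)"
  unfolding polymorphic_mass_def total_rate_limit_def sum_divide_distrib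
  using tendsto_sum[OF tendsto_mss_rate] by (simp add: mss_rate_def)

lemma sum_mss_trans_singleton_le:
  assumes two: "a \<noteq> (b::'g)" and u: "u \<in> {0<..1}"
  shows "(\<Sum>g\<in>UNIV. mss u {} * trans p u \<nu> {} {g}) \<le> polymorphic_mass u"
proof -
  have "mss u {} * trans p u \<nu> {} {g} \<le> mss u {g}" for g
    using member_le_sum[of "{}" UNIV "\<lambda>x. mss u x * trans p u \<nu> x {g}"] mss_trans[OF u]
      mss_nonneg[OF u] trans_nonneg[OF rule _ nu_range] u
    by simp
  then have "(\<Sum>g\<in>UNIV. mss u {} * trans p u \<nu> {} {g}) \<le> (\<Sum>y\<in>(\<lambda>g. {g}) ` UNIV. mss u y)"
    by (simp add: sum.reindex sum_mono)
  also have "\<dots> \<le> polymorphic_mass u"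
    unfolding polymorphic_mass_def
    by (rule sum_mono2) (use singleton_polymorphic[OF two] mss_nonneg[OF u] in auto)
  finally show ?thesis .
qed

text \<open>With at least two sites, \<open>a\<close> feeds the polymorphic singletons at rate \<open>\<nu> b(a)\<close>.\<close>

lemma total_rate_limit_pos:
  assumes two: "a \<noteq> (b::'g)"
  shows "0 < total_rate_limit"
proof -
  have "((\<lambda>u. trans p u \<nu> {} {g} / u) \<longlongrightarrow> \<nu> * dd p g {}) (at_right 0)" for g
    using tendsto_difference_quotient_at_right[OF has_real_derivative_trans, of p \<nu> "{}" "{g}"]
    by (simp add: trans_no_mutation_monomorphic[OF rule] trans_deriv_empty)
  then have "((\<lambda>u. (\<Sum>g\<in>UNIV. mss u {} * trans p u \<nu> {} {g}) / u)
      \<longlongrightarrow> (\<Sum>g\<in>UNIV. pi_a0 * (\<nu> * dd p g {}))) (at_right 0)"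
    unfolding sum_divide_distrib times_divide_eq_right[symmetric]
    by (intro tendsto_sum tendsto_mult tendsto_mss_empty)
  moreover have "eventually (\<lambda>u. (\<Sum>g\<in>UNIV. mss u {} * trans p u \<nu> {} {g}) / u \<le> polymorphic_mass u / u)
      (at_right 0)"
    using eventually_at_right_0_1
    by eventually_elim (simp add: divide_right_mono sum_mss_trans_singleton_le[OF two])
  ultimately have "(\<Sum>g\<in>UNIV. pi_a0 * (\<nu> * dd p g {})) \<le> total_rate_limit"
    using tendsto_le[OF trivial_limit_at_right_real tendsto_polymorphic_mass_quotient] by blast
  moreover have "(\<Sum>g\<in>UNIV. pi_a0 * (\<nu> * dd p g {})) = pi_a0 * \<nu> * btot p {}"
    by (simp add: btot_eq_sum_dd sum_distrib_left mult.assoc)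
  moreover have "0 < pi_a0 * \<nu> * btot p {}"
    using fix_flux_A_pos fix_flux_a_pos nu_pos btot_pos by (simp add: pi_a0_def)
  ultimately show ?thesis
    by linarith
qed

lemma E_RMC_Delta_sel:
  assumes two: "a \<noteq> (b::'g)"
  shows "E_RMC p \<nu> (Delta_sel p) = selection_slope / total_rate_limit"
proof -
  have total_pos: "0 < total_rate_limit"
    by (rule total_rate_limit_pos[OF two])
  have pi_RMC: "pi_RMC p \<nu> x = rate_limit x / total_rate_limit" if x: "x \<in> polymorphic" for x
  proof -
    have "((\<lambda>u. mss_rate u x / (polymorphic_mass u / u)) \<longlongrightarrow> rate_limit x / total_rate_limit) (at_right 0)"
      by (intro tendsto_divide tendsto_mss_rate[OF x] tendsto_polymorphic_mass_quotient)
         (use total_pos in simp)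
    moreover have "eventually (\<lambda>u. mss_rate u x / (polymorphic_mass u / u)
        = mss u x / (1 - mss u {} - mss u UNIV)) (at_right 0)"
      using eventually_at_right_0_1
    proof eventually_elim
      case (elim u)
      then have "1 - mss u {} - mss u UNIV = polymorphic_mass u"
        using mss_empty_UNIV[OF elim] by simp
      then show ?case
        using elim by (simp add: mss_rate_def)
    qed
    ultimately show ?thesis
      unfolding pi_RMC_def by (intro tendsto_Lim) (auto intro: Lim_transform_eventually)
  qed
  have "((\<lambda>u. \<Sum>x\<in>polymorphic. mss_rate u x * Delta_sel p x)
      \<longlongrightarrow> (\<Sum>x\<in>polymorphic. rate_limit x * Delta_sel p x)) (at_right 0)"
    by (intro tendsto_sum tendsto_mult_right tendsto_mss_rate)
  moreover have "(\<Sum>x\<in>polymorphic. mss_rate u x * Delta_sel p x) = E_MSS p u \<nu> (Delta_sel p) / u" for u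
    unfolding E_MSS_def sum_UNIV_split_polymorphic[of "\<lambda>x. mss u x * Delta_sel p x"]
    by (simp add: Delta_sel_monomorphic mss_rate_def sum_divide_distrib)
  ultimately have "((\<lambda>u. E_MSS p u \<nu> (Delta_sel p) / u)
      \<longlongrightarrow> (\<Sum>x\<in>polymorphic. rate_limit x * Delta_sel p x)) (at_right 0)"
    by simp
  then have "(\<Sum>x\<in>polymorphic. rate_limit x * Delta_sel p x) = selection_slope"
    by (rule tendsto_unique[OF trivial_limit_at_right_real _ tendsto_E_MSS_Delta_sel_quotient])
  then show ?thesis
    unfolding E_RMC_def polymorphic_def[symmetric]
    by (simp add: pi_RMC sum_divide_distrib[symmetric])
qed

end

subsection \<open>The three criteria\<close>

lemma frac_less_weighted_frac_iff:
  fixes X Y a b :: real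
  assumes "0 < X" "0 < Y" "0 < a" "0 < b"
  shows "X / (X + Y) < X * a / (X * a + Y * b) \<longleftrightarrow> b < a"
proof -
  have "0 < X + Y" "0 < X * a + Y * b"
    using assms by (simp_all add: add_pos_pos)
  then have "X / (X + Y) < X * a / (X * a + Y * b) \<longleftrightarrow> (X * Y) * b < (X * Y) * a"
    by (simp add: field_simps)
  then show ?thesis
    using assms by simp
qed

lemma weighted_diff_pos_iff:
  fixes X Y a b :: real
  assumes "0 < X" "0 < Y" "0 < a" "0 < b"
  shows "0 < X * a / (X * a + Y * b) * Y - Y * b / (X * a + Y * b) * X \<longleftrightarrow> b < a"
proof -
  have "X * a / (X * a + Y * b) * Y - Y * b / (X * a + Y * b) * X = (X * Y) * (a - b) / (X * a + Y * b)"
    by (simp add: diff_divide_distrib algebra_simps)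
  moreover have "0 < X * a + Y * b"
    using assms by (simp add: add_pos_pos)
  ultimately show ?thesis
    using assms by (auto simp: zero_less_divide_iff zero_less_mult_iff mult_less_0_iff)
qed

context fixation_model
begin

lemma Lim_E_MSS_xbar_gt_iff:
  "\<nu> * btot p {} / (\<nu> * btot p {} + (1 - \<nu>) * btot p UNIV) < Lim (at_right 0) (\<lambda>u. E_MSS p u \<nu> xbar)
    \<longleftrightarrow> rho_a p \<nu> < rho_A p \<nu>"
  unfolding Lim_E_MSS_xbar pi_A0_def fix_flux_A_def fix_flux_a_def
  using nu_pos nu_less_1 btot_pos rho_A_pos rho_a_pos by (intro frac_less_weighted_frac_iff) auto

lemma selection_slope_pos_iff: "0 < selection_slope \<longleftrightarrow> rho_a p \<nu> < rho_A p \<nu>"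
  unfolding selection_slope_def pi_A0_def pi_a0_def fix_flux_A_def fix_flux_a_def
  using nu_pos nu_less_1 btot_pos rho_A_pos rho_a_pos by (intro weighted_diff_pos_iff) auto

text \<open>For a single site \<open>E_RMC\<close> is an empty sum and \<open>rho_A = rho_a = 1\<close>, so both sides
  are false.\<close>

lemma E_RMC_Delta_sel_pos_iff: "0 < E_RMC p \<nu> (Delta_sel p) \<longleftrightarrow> rho_a p \<nu> < rho_A p \<nu>"
proof (cases "\<exists>a b :: 'g. a \<noteq> b")
  case True
  then obtain a b :: 'g where ab: "a \<noteq> b"
    by blast
  have "0 < total_rate_limit"
    by (rule total_rate_limit_pos[OF ab])
  then show ?thesis
    by (simp add: E_RMC_Delta_sel[OF ab] zero_less_divide_iff flip: selection_slope_pos_iff)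
next
  case False
  then have same: "a = b" for a b :: 'g
    by blast
  then have single: "{g} = UNIV" "UNIV - {g} = {}" for g :: 'g
    by auto
  have "x \<in> {{}, UNIV}" for x :: "'g set"
  proof (cases "x = {}")
    case False
    then obtain y where "y \<in> x"
      by blast
    then have "z \<in> x" for z
      using same[of z y] by simp
    then have "x = UNIV"
      by blast
    then show ?thesis
      by simp
  qed simp
  then have no_polymorphic: "UNIV - {{}, UNIV :: 'g set} = {}"
    by blast
  have "E_RMC p \<nu> (Delta_sel p) = 0"
    unfolding E_RMC_def no_polymorphic by simp
  moreover have "rho_A p \<nu> = 1" "rho_a p \<nu> = 1"
    using btot_pos[of "{}"] btot_pos[of UNIV]
    by (simp_all add: rho_A_eq rho_a_eq single absorption_monomorphic btot_eq_sum_dd)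
  ultimately show ?thesis
    by simp
qed

end

theorem theorem4:
  fixes p :: "('g::finite) rule" and \<nu> :: real
  assumes "replacement_rule p" and "fixation_axiom p"
    and "0 < \<nu>" and "\<nu> < 1"
  shows "(rho_A p \<nu> > rho_a p \<nu>
            \<longleftrightarrow> Lim (at_right 0) (\<lambda>u. E_MSS p u \<nu> xbar)
                  > \<nu> * btot p {} / (\<nu> * btot p {} + (1 - \<nu>) * btot p UNIV))
       \<and> (rho_A p \<nu> > rho_a p \<nu> \<longleftrightarrow> E_RMC p \<nu> (Delta_sel p) > 0)
       \<and> (rho_A p \<nu> > rho_a p \<nu>
            \<longleftrightarrow> right_deriv0 (\<lambda>u. E_MSS_ext p u \<nu> (Delta_sel p)) > 0)"
proof -
  obtain g0 es where "fixation_model p \<nu> g0 es"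
    using assms unfolding fixation_axiom_def fixation_model_def by blast
  then interpret fixation_model p \<nu> g0 es .
  show ?thesis
    using Lim_E_MSS_xbar_gt_iff E_RMC_Delta_sel_pos_iff selection_slope_pos_iff
    by (simp add: right_deriv0_E_MSS_Delta_sel)
qed

end
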